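(* For $i=1,2$ let $F_i$ be a field of characteristic different from $2$, let $a_i\in F_i^\times\setminus F_i^{\times 2}$, $K_i=F_i(\sqrt{a_i})$, $G_i=\mathrm{Gal}(K_i/F_i)$, and $T_i=K_i^\times/K_i^{\times 2}$. Let $G$ be a group of order $2$ and regard each $T_i$ as an $\mathbb{F}_2[G]$-module via the isomorphism $G\to G_i$. Let $\Upsilon(K_i)=1$ if $-1\in N(K_i^\times)$ and $\Upsilon(K_i)=0$ otherwise. Then $T_1\cong T_2$ as $\mathbb{F}_2[G]$-modules if and only if both of the following hold: (1) $2\Upsilon(K_1)+\dim_{\mathbb{F}_2}F_1^\times/N(K_1^\times) = 2\Upsilon(K_2)+\dim_{\mathbb{F}_2}F_2^\times/N(K_2^\times)$; (2) $\Upsilon(K_2)+\dim_{\mathbb{F}_2}N(K_1^\times)/F_1^{\times 2} = \Upsilon(K_1)+\dim_{\mathbb{F}_2}N(K_2^\times)/F_2^{\times 2}$.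
   Context: $N(K_i^\times)\subseteq F_i^\times$ denotes the group of norms from $K_i$ to $F_i$; it contains $F_i^{\times 2}$. Dimensions are as $\mathbb{F}_2$-vector spaces (cardinal numbers). *)

theory Defs
  imports Main "HOL-Library.Set_Algebras" "HOL-Library.Equipollence"
begin

definition units_of_field :: "'a::field set" where
  "units_of_field = {x. x \<noteq> 0}"

definition squares_of_field :: "'a::field set" where
  "squares_of_field = {x * x | x. x \<noteq> 0}"

text \<open>Quotient U/H as the set of cosets x H (x in U); cosets multiply via Set_Algebras.\<close>
definition quot :: "'a::times set \<Rightarrow> 'a set \<Rightarrow> 'a set set" where
  "quot U H = (\<lambda>x. x *o H) ` U"

text \<open>B is an F_2-basis of the elementary abelian 2-group Q (with neutral element H):
  every element of Q is the product of a unique finite subset of B.\<close>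
definition F2_basis :: "'a::comm_monoid_mult set \<Rightarrow> 'a set set \<Rightarrow> 'a set set \<Rightarrow> bool" where
  "F2_basis H Q B \<longleftrightarrow> B \<subseteq> Q \<and> bij_betw (\<lambda>X. H * \<Prod>X) {X. finite X \<and> X \<subseteq> B} Q"

text \<open>K = F(sqrt a) via the field embedding iota and a square root r of iota a.\<close>
definition quad_ext :: "('a::field \<Rightarrow> 'k::field) \<Rightarrow> 'a \<Rightarrow> 'k \<Rightarrow> bool" where
  "quad_ext \<iota> a r \<longleftrightarrow>
     (\<forall>x y. \<iota> (x + y) = \<iota> x + \<iota> y) \<and> (\<forall>x y. \<iota> (x * y) = \<iota> x * \<iota> y) \<and> \<iota> 1 = 1 \<and>
     r * r = \<iota> a \<and> (\<forall>z. \<exists>x y. z = \<iota> x + \<iota> y * r)"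

definition gal_generator :: "('a::field \<Rightarrow> 'k::field) \<Rightarrow> ('k \<Rightarrow> 'k) \<Rightarrow> bool" where
  "gal_generator \<iota> \<sigma> \<longleftrightarrow> bij \<sigma> \<and> (\<forall>x y. \<sigma> (x + y) = \<sigma> x + \<sigma> y) \<and>
     (\<forall>x y. \<sigma> (x * y) = \<sigma> x * \<sigma> y) \<and> (\<forall>x. \<sigma> (\<iota> x) = \<iota> x) \<and> \<sigma> \<noteq> id"

text \<open>The norm group N(K^x), a subset of F^x; for K/F quadratic, N(z) = z * sigma z.\<close>
definition norm_group :: "('a::field \<Rightarrow> 'k::field) \<Rightarrow> ('k \<Rightarrow> 'k) \<Rightarrow> 'a set" where
  "norm_group \<iota> \<sigma> = {x. \<exists>z. z \<noteq> 0 \<and> \<iota> x = z * \<sigma> z}"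

definition Upsilon :: "('a::field \<Rightarrow> 'k::field) \<Rightarrow> ('k \<Rightarrow> 'k) \<Rightarrow> nat" where
  "Upsilon \<iota> \<sigma> = (if (-1::'a) \<in> norm_group \<iota> \<sigma> then 1 else 0)"

text \<open>T = K^x / K^x2 with G acting through sigma; an F_2[G]-module isomorphism is a
  group isomorphism commuting with the action of the generator.\<close>
definition T_mod_iso :: "('k::field \<Rightarrow> 'k) \<Rightarrow> ('l::field \<Rightarrow> 'l) \<Rightarrow> bool" where
  "T_mod_iso \<sigma>1 \<sigma>2 \<longleftrightarrow>
     (\<exists>f. bij_betw f (quot (units_of_field::'k set) squares_of_field)
                     (quot (units_of_field::'l set) squares_of_field) \<and>
          (\<forall>A \<in> quot (units_of_field::'k set) squares_of_field.
           \<forall>B \<in> quot (units_of_field::'k set) squares_of_field. f (A * B) = f A * f B) \<and>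
          (\<forall>A \<in> quot (units_of_field::'k set) squares_of_field. f (\<sigma>1 ` A) = \<sigma>2 ` f A))"

end

(*
  Written additively, T = K^x/K^x2 is a vector space over F_2 with the involution sigma, and
  s = 1 + sigma satisfies s o s = 0.  Such a module is determined up to isomorphism by the
  dimension of im s and that of a complement of im s in ker s: it is the direct sum of that many
  free and trivial F_2[G]-modules.  On square classes s z = z sigma(z) is the norm, so im s is the
  image of N(K^x)/F^x2 under j : F^x/F^x2 -> T, whose kernel is spanned by the class of a, and a
  is a norm up to squares iff -1 is a norm.  By Hilbert 90, ker s = im j if -1 is not a norm,
  and otherwise ker s is spanned by im j and the class of w r for any w of norm -1.  Counting
  dimensions gives dim N/F^x2 = Upsilon + dim im s and 1 + dim C = 2 Upsilon + dim F^x/N; the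
  two conditions of the theorem are these identities with the finite summands cancelled.
*)

theory Submission
  imports Defs "HOL-Library.Z2" "HOL.Vector_Spaces" "HOL-Algebra.Free_Abelian_Groups"
begin

section \<open>Cardinal arithmetic\<close>

lemma finite_Fpow_iff: "finite (Fpow A) \<longleftrightarrow> finite A"
proof
  assume "finite (Fpow A)"
  moreover have "(\<lambda>x. {x}) ` A \<subseteq> Fpow A" by (auto simp: Fpow_def)
  ultimately have "finite ((\<lambda>x. {x}) ` A)" by (rule finite_subset[rotated])
  then show "finite A" by (rule finite_imageD) (simp add: inj_on_def)
next
  assume "finite A"
  then show "finite (Fpow A)" by (rule finite_subset[OF Fpow_subset_Pow, OF finite_Pow_iff[THEN iffD2]])
qed

lemma Fpow_eqpoll_imp_eqpoll:
  assumes "Fpow A \<approx> Fpow B" shows "A \<approx> B"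
proof (cases "finite A")
  case True
  then have "finite B"
    using eqpoll_finite_iff[OF assms] by (simp add: finite_Fpow_iff)
  have "Fpow A = Pow A" "Fpow B = Pow B"
    using True \<open>finite B\<close> unfolding Fpow_def by (blast intro: finite_subset)+
  then have "card (Pow A) = card (Pow B)"
    using assms True \<open>finite B\<close> eqpoll_iff_card[of "Pow A" "Pow B"] by simp
  then have "card A = card B"
    using True \<open>finite B\<close> by (simp add: card_Pow)
  then show ?thesis
    using True \<open>finite B\<close> eqpoll_iff_card by blast
next
  case False
  then have "infinite B"
    using eqpoll_finite_iff[OF assms] by (simp add: finite_Fpow_iff)
  have "A \<approx> Fpow A" using eqpoll_Fpow[OF False] by (rule eqpoll_sym)
  also have "\<dots> \<approx> Fpow B" by (rule assms)
  also have "\<dots> \<approx> B" using eqpoll_Fpow[OF \<open>infinite B\<close>] .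
  finally show ?thesis .
qed

lemma insert_eqpoll_lessThan_1_Plus: "e \<notin> X \<Longrightarrow> insert e X \<approx> {..<1::nat} <+> X"
proof -
  assume "e \<notin> X"
  then have "bij_betw (\<lambda>y. if y = e then Inl 0 else Inr y) (insert e X) ({..<1::nat} <+> X)"
    unfolding bij_betw_def inj_on_def by (auto simp: Plus_def image_iff)
  then show ?thesis unfolding eqpoll_def by blast
qed

lemma lessThan_0_Plus_eqpoll: "{..<0::nat} <+> X \<approx> X"
  by (simp add: Plus_def inj_on_image_eqpoll_self)

lemma lessThan_Plus_lessThan_Plus_eqpoll: "{..<m::nat} <+> ({..<n} <+> X) \<approx> {..<m + n} <+> X"
proof -
  have "{..<m::nat} <+> ({..<n} <+> X) \<approx> ({..<m} <+> {..<n}) <+> X"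
    using card_of_Plus_assoc eqpoll_iff_card_of_ordIso eqpoll_sym by blast
  also have "\<dots> \<approx> {..<m + n} <+> X"
    by (intro sum_eqpoll_cong) (simp_all add: eqpoll_iff_card card_Plus)
  finally show ?thesis .
qed

lemma lessThan_Plus_cancel: "{..<n::nat} <+> X \<approx> {..<n} <+> Y \<Longrightarrow> X \<approx> Y"
proof (induction n)
  case 0
  then show ?case using lessThan_0_Plus_eqpoll eqpoll_sym eqpoll_trans by metis
next
  case (Suc n)
  have "{..<Suc n} <+> X = insert (Inl n) ({..<n} <+> X)" "{..<Suc n} <+> Y = insert (Inl n) ({..<n} <+> Y)"
    by (auto simp: Plus_def lessThan_Suc)
  then have "insert (Inl n) ({..<n} <+> X) \<approx> insert (Inl n) ({..<n} <+> Y)"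
    using Suc.prems by simp
  then have "{..<n} <+> X \<approx> {..<n} <+> Y" by (rule insert_eqpoll_insertD) auto
  then show ?case by (rule Suc.IH)
qed

lemma lessThan_Plus_eqpoll_cancel_iff:
  assumes "{..<k::nat} <+> X1 \<approx> A1" "{..<k} <+> X2 \<approx> A2"
  shows "A1 \<approx> A2 \<longleftrightarrow> X1 \<approx> X2"
proof
  assume "A1 \<approx> A2"
  then have "{..<k} <+> X1 \<approx> {..<k} <+> X2"
    using assms eqpoll_trans eqpoll_sym by metis
  then show "X1 \<approx> X2" by (rule lessThan_Plus_cancel)
next
  assume "X1 \<approx> X2"
  then have "{..<k} <+> X1 \<approx> {..<k} <+> X2" by (simp add: sum_eqpoll_cong)
  then show "A1 \<approx> A2" using assms eqpoll_trans eqpoll_sym by metis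
qed

lemma lessThan_Plus_eqpoll_swap_iff:
  assumes "A1 \<approx> {..<m1::nat} <+> X1" "A2 \<approx> {..<m2::nat} <+> X2"
  shows "{..<m2} <+> A1 \<approx> {..<m1} <+> A2 \<longleftrightarrow> X1 \<approx> X2"
proof (rule lessThan_Plus_eqpoll_cancel_iff)
  have "{..<m2} <+> A1 \<approx> {..<m2} <+> ({..<m1} <+> X1)" by (simp add: assms(1) sum_eqpoll_cong)
  also have "\<dots> \<approx> {..<m1 + m2} <+> X1" using lessThan_Plus_lessThan_Plus_eqpoll by (metis add.commute)
  finally show "{..<m1 + m2} <+> X1 \<approx> {..<m2} <+> A1" by (rule eqpoll_sym)
  have "{..<m1} <+> A2 \<approx> {..<m1} <+> ({..<m2} <+> X2)" by (simp add: assms(2) sum_eqpoll_cong)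
  also have "\<dots> \<approx> {..<m1 + m2} <+> X2" by (rule lessThan_Plus_lessThan_Plus_eqpoll)
  finally show "{..<m1 + m2} <+> X2 \<approx> {..<m1} <+> A2" by (rule eqpoll_sym)
qed

lemma Plus_eqpoll_Plus_cong_iff:
  "B1 \<approx> D1 \<Longrightarrow> B2 \<approx> D2 \<Longrightarrow> A1 <+> B1 \<approx> A2 <+> B2 \<longleftrightarrow> A1 <+> D1 \<approx> A2 <+> D2"
  by (meson eqpoll_refl eqpoll_sym eqpoll_trans sum_eqpoll_cong)

section \<open>Vector spaces over \<open>\<bbbF>\<^sub>2\<close>\<close>

class f2_space = ab_group_add + assumes add_self [simp]: "x + x = 0"

lemma f2_add_cancel_left [simp]: "(x::'v::f2_space) + (x + y) = y"
  by (metis add.assoc add_self add_0)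

lemma f2_add_eq_0_iff: "(x::'v::f2_space) + y = 0 \<longleftrightarrow> x = y"
  by (metis add_self f2_add_cancel_left add_0_right)

definition scaleF2 :: "bit \<Rightarrow> 'v::f2_space \<Rightarrow> 'v" where
  "scaleF2 b x = (if b = 0 then 0 else x)"

interpretation f2: vector_space "scaleF2 :: bit \<Rightarrow> 'v::f2_space \<Rightarrow> 'v"
  by unfold_locales (auto simp: scaleF2_def add_self split: bit.splits)

interpretation f2_pair: vector_space_pair "scaleF2 :: bit \<Rightarrow> 'v::f2_space \<Rightarrow> 'v" "scaleF2 :: bit \<Rightarrow> 'w::f2_space \<Rightarrow> 'w"
  by unfold_locales

abbreviation f2_linear :: "('v::f2_space \<Rightarrow> 'w::f2_space) \<Rightarrow> bool" where
  "f2_linear \<equiv> Vector_Spaces.linear (scaleF2 :: bit \<Rightarrow> 'v \<Rightarrow> 'v) (scaleF2 :: bit \<Rightarrow> 'w \<Rightarrow> 'w)"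

lemma f2_linear_iff_additive: "f2_linear (f :: 'v::f2_space \<Rightarrow> 'w::f2_space) \<longleftrightarrow> (\<forall>x y. f (x + y) = f x + f y)"
proof -
  have "f (scaleF2 c x) = scaleF2 c (f x)" if "\<forall>x y. f (x + y) = f x + f y" for c x
    using that[rule_format, of 0 0] by (simp add: scaleF2_def)
  moreover have "vector_space (scaleF2 :: bit \<Rightarrow> 'v \<Rightarrow> 'v)" "vector_space (scaleF2 :: bit \<Rightarrow> 'w \<Rightarrow> 'w)"
    by (rule f2.vector_space_axioms)+
  ultimately show ?thesis
    unfolding Vector_Spaces.linear_iff by blast
qed

lemma f2_sum_filter_scale:
  assumes "finite t" shows "(\<Sum>a\<in>t. scaleF2 (u a) a) = \<Sum>{a\<in>t. u a \<noteq> 0}"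
proof -
  have "\<And>a. scaleF2 (u a) a = (if u a \<noteq> 0 then a else 0)" by (simp add: scaleF2_def)
  then show ?thesis using assms by (simp only: sum.inter_filter)
qed

lemma f2_span_eq_sums: "f2.span S = {Sum X | X. finite X \<and> X \<subseteq> (S::'v::f2_space set)}"
proof (intro Set.set_eqI iffI)
  fix y assume "y \<in> f2.span S"
  then obtain t u where "y = (\<Sum>a\<in>t. scaleF2 (u a) a)" "finite t" "t \<subseteq> S"
    unfolding f2.span_explicit by blast
  then show "y \<in> {Sum X | X. finite X \<and> X \<subseteq> S}"
    by (auto simp: f2_sum_filter_scale)
next
  fix y assume "y \<in> {Sum X | X. finite X \<and> X \<subseteq> S}"
  then obtain X where "y = \<Sum>X" "finite X" "X \<subseteq> S" by blast
  then show "y \<in> f2.span S"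
    using f2.span_sum[of X "\<lambda>x. x" S] f2.span_base[of _ S] by blast
qed

lemma f2_independent_iff_sums:
  "f2.independent (S::'v::f2_space set) \<longleftrightarrow> (\<forall>X. finite X \<longrightarrow> X \<subseteq> S \<longrightarrow> \<Sum>X = 0 \<longrightarrow> X = {})"
proof
  assume S: "f2.independent S"
  show "\<forall>X. finite X \<longrightarrow> X \<subseteq> S \<longrightarrow> \<Sum>X = 0 \<longrightarrow> X = {}"
  proof (intro allI impI)
    fix X assume X: "finite X" "X \<subseteq> S" "\<Sum>X = 0"
    then have "(\<Sum>v\<in>X. scaleF2 1 v) = 0" by (simp add: scaleF2_def)
    from f2.independentD[OF S X(1,2) this] show "X = {}" by auto
  qed
next
  assume sums: "\<forall>X. finite X \<longrightarrow> X \<subseteq> S \<longrightarrow> \<Sum>X = 0 \<longrightarrow> X = {}"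
  show "f2.independent S"
    unfolding f2.independent_explicit_module
  proof (intro allI impI)
    fix t u v assume t: "finite t" "t \<subseteq> S" "(\<Sum>v\<in>t. scaleF2 (u v) v) = 0" "v \<in> t"
    then have "\<Sum>{a\<in>t. u a \<noteq> 0} = 0" by (simp add: f2_sum_filter_scale)
    moreover have "finite {a\<in>t. u a \<noteq> 0}" "{a\<in>t. u a \<noteq> 0} \<subseteq> S" using t(1,2) by auto
    ultimately have "{a\<in>t. u a \<noteq> 0} = {}" using sums by blast
    then show "u v = 0" using t(4) by blast
  qed
qed

lemma f2_sum_add_sum:
  assumes "finite X" "finite Y"
  shows "\<Sum>X + \<Sum>Y = (\<Sum>((X - Y) \<union> (Y - X)) :: 'v::f2_space)"
proof -
  have "\<Sum>X = \<Sum>(X \<inter> Y) + \<Sum>(X - Y)" "\<Sum>Y = \<Sum>(Y \<inter> X) + \<Sum>(Y - X)"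
    using assms by (simp_all only: sum.Int_Diff[symmetric])
  moreover have "\<Sum>((X - Y) \<union> (Y - X)) = \<Sum>(X - Y) + (\<Sum>(Y - X) :: 'v)"
    using assms by (intro sum.union_disjoint) auto
  ultimately show ?thesis by (simp add: Int_commute add_ac add_self)
qed

lemma f2_independent_inj_on_Sum: "f2.independent (S::'v::f2_space set) \<Longrightarrow> inj_on Sum (Fpow S)"
proof (rule inj_onI)
  fix X Y assume S: "f2.independent S" and XY: "X \<in> Fpow S" "Y \<in> Fpow S" "\<Sum>X = \<Sum>Y"
  then have "\<Sum>((X - Y) \<union> (Y - X)) = (0::'v)"
    using f2_sum_add_sum[of X Y] by (simp add: Fpow_def add_self)
  moreover have "finite ((X - Y) \<union> (Y - X))" "(X - Y) \<union> (Y - X) \<subseteq> S"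
    using XY(1,2) by (auto simp: Fpow_def)
  ultimately have "(X - Y) \<union> (Y - X) = {}"
    using S unfolding f2_independent_iff_sums by blast
  then show "X = Y" by blast
qed

lemma f2_independent_bij_betw_Sum: "f2.independent (S::'v::f2_space set) \<Longrightarrow> bij_betw Sum (Fpow S) (f2.span S)"
  unfolding bij_betw_def f2_span_eq_sums Fpow_def using f2_independent_inj_on_Sum[unfolded Fpow_def]
  by blast

lemma f2_span_eqpoll_Fpow: "f2.independent (S::'v::f2_space set) \<Longrightarrow> f2.span S \<approx> Fpow S"
  using f2_independent_bij_betw_Sum eqpoll_def eqpoll_sym by blast

lemma f2_span_eqpoll_imp_eqpoll:
  "f2.independent (A::'v::f2_space set) \<Longrightarrow> f2.independent (B::'w::f2_space set) \<Longrightarrow>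
   f2.span A \<approx> f2.span B \<Longrightarrow> A \<approx> B"
  by (meson Fpow_eqpoll_imp_eqpoll eqpoll_sym eqpoll_trans f2_span_eqpoll_Fpow)

lemma f2_span_Int_span_disjoint:
  assumes "f2.independent (A \<union> C)" "A \<inter> C = {}"
  shows "f2.span A \<inter> f2.span C = {0::'v::f2_space}"
proof -
  have "x = 0" if x: "x \<in> f2.span A" "x \<in> f2.span C" for x
  proof -
    obtain X Y where XY: "x = \<Sum>X" "finite X" "X \<subseteq> A" "x = \<Sum>Y" "finite Y" "Y \<subseteq> C"
      using x unfolding f2_span_eq_sums by blast
    then have "X = Y"
      using f2_independent_inj_on_Sum[OF assms(1)] unfolding inj_on_def Fpow_def by blast
    then have "X = {}" using XY(3,6) assms(2) by blast
    then show ?thesis using XY(1) by simp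
  qed
  then show ?thesis using f2.span_zero by blast
qed

lemma f2_coset_eq_iff:
  assumes "f2.subspace W" shows "x +o W = y +o W \<longleftrightarrow> x + (y::'v::f2_space) \<in> W"
proof
  assume "x +o W = y +o W"
  then have "x \<in> y +o W"
    using assms f2.subspace_0 by (metis add_0_right set_plus_intro2)
  then obtain w where "w \<in> W" "x = y + w" by (auto simp: elt_set_plus_def)
  then show "x + y \<in> W" by (metis add.commute f2_add_cancel_left)
next
  assume xy: "x + y \<in> W"
  have "x +o W \<subseteq> y +o W" if "x + y \<in> W" for x y
  proof
    fix z assume "z \<in> x +o W"
    then obtain w where "w \<in> W" "z = y + ((x + y) + w)" by (auto simp: elt_set_plus_def add_ac)
    then show "z \<in> y +o W" using that assms f2.subspace_add set_plus_intro2 by metis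
  qed
  then show "x +o W = y +o W" using xy by (metis add.commute subset_antisym)
qed

lemma f2_cosets_of_complement:
  assumes "f2.independent (A \<union> C)" "A \<inter> C = {}"
  shows "inj_on (\<lambda>x. x +o f2.span A) (f2.span (C::'v::f2_space set))"
    and "(\<lambda>x. x +o f2.span A) ` f2.span C = (\<lambda>x. x +o f2.span A) ` f2.span (A \<union> C)"
proof -
  show "inj_on (\<lambda>x. x +o f2.span A) (f2.span C)"
  proof (rule inj_onI)
    fix x y assume "x \<in> f2.span C" "y \<in> f2.span C" "x +o f2.span A = y +o f2.span A"
    then have "x + y \<in> f2.span A \<inter> f2.span C"
      by (simp add: f2_coset_eq_iff f2.span_add)
    then show "x = y" using f2_span_Int_span_disjoint[OF assms] f2_add_eq_0_iff by blast
  qed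
  have "x +o f2.span A \<in> (\<lambda>x. x +o f2.span A) ` f2.span C" if x: "x \<in> f2.span (A \<union> C)" for x
  proof -
    obtain a c where "a \<in> f2.span A" "c \<in> f2.span C" "x = a + c"
      using x unfolding f2.span_Un by blast
    then have "x +o f2.span A = c +o f2.span A"
      by (simp add: f2_coset_eq_iff add_ac)
    then show ?thesis using \<open>c \<in> f2.span C\<close> by blast
  qed
  then show "(\<lambda>x. x +o f2.span A) ` f2.span C = (\<lambda>x. x +o f2.span A) ` f2.span (A \<union> C)"
    using f2.span_mono[of C "A \<union> C"] by blast
qed

lemma f2_complement_eqpoll:
  assumes "f2.independent (A \<union> C)" "A \<inter> C = {}" "f2.independent (A' \<union> C')" "A' \<inter> C' = {}"
    and "f2.span A = f2.span A'" "f2.span (A \<union> C) = f2.span ((A'::'v::f2_space set) \<union> C')"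
  shows "C \<approx> C'"
proof -
  note cosets = f2_cosets_of_complement[OF assms(1,2)] f2_cosets_of_complement[OF assms(3,4)]
  have "f2.span C \<approx> (\<lambda>x. x +o f2.span A) ` f2.span C"
    using cosets(1) inj_on_image_eqpoll_self eqpoll_sym by blast
  also have "\<dots> = (\<lambda>x. x +o f2.span A') ` f2.span C'"
    using cosets(2,4) assms(5,6) by simp
  also have "\<dots> \<approx> f2.span C'"
    using cosets(3) inj_on_image_eqpoll_self by blast
  finally show ?thesis
    using f2_span_eqpoll_imp_eqpoll f2.independent_mono assms(1,3) by blast
qed

lemma f2_linear_bij_extend:
  assumes B1: "f2.independent (B1::'v::f2_space set)" "f2.span B1 = UNIV"
    and B2: "f2.independent (B2::'w::f2_space set)" "f2.span B2 = UNIV"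
    and g: "bij_betw g B1 B2"
  obtains \<phi> where "f2_linear \<phi>" "bij \<phi>" "\<And>x. x \<in> B1 \<Longrightarrow> \<phi> x = g x"
proof
  let ?\<phi> = "f2_pair.construct B1 g"
  show lin: "f2_linear ?\<phi>" using f2_pair.linear_construct[OF B1(1)] .
  show on_B1: "\<And>x. x \<in> B1 \<Longrightarrow> ?\<phi> x = g x" using f2_pair.construct_basis[OF B1(1)] by blast
  then have image: "?\<phi> ` B1 = B2" using g by (simp add: bij_betw_def)
  have "inj_on ?\<phi> (f2.span B1)"
    using f2_pair.linear_inj_on_span_independent_image[OF lin] image B2(1) on_B1 g
    by (metis bij_betw_def inj_on_cong)
  moreover have "range ?\<phi> = f2.span (g ` B1)" by (rule f2_pair.range_construct_eq_span[OF B1(1)])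
  then have "range ?\<phi> = UNIV" using g B2(2) by (simp add: bij_betw_def)
  ultimately show "bij ?\<phi>" using B1(2) by (simp add: bij_def)
qed

lemma f2_lifts_Un_kernel_independent:
  assumes lin: "f2_linear (s::'v::f2_space \<Rightarrow> 'v)"
    and R: "f2.independent R" and K: "f2.independent K" "K \<subseteq> {x. s x = 0}"
    and m: "\<And>b. b \<in> R \<Longrightarrow> s (m b) = b"
  shows "f2.independent (m ` R \<union> K)"
  unfolding f2_independent_iff_sums
proof (intro allI impI)
  fix X assume X: "finite X" "X \<subseteq> m ` R \<union> K" "\<Sum>X = 0"
  let ?X1 = "X \<inter> m ` R" and ?X2 = "X - m ` R"
  have "\<Sum>X = \<Sum>?X1 + \<Sum>?X2" using X(1) by (simp add: sum.Int_Diff)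
  moreover have "s (\<Sum>?X2) = 0"
    using f2_pair.linear_sum[OF lin, of "\<lambda>x. x" ?X2] X(2) K(2) by (auto intro!: sum.neutral)
  ultimately have "s (\<Sum>?X1) = 0"
    using X(3) f2_pair.linear_add[OF lin] f2_pair.linear_0[OF lin] by (metis add_0_right)
  moreover have "s (\<Sum>?X1) = \<Sum>(s ` ?X1)"
  proof -
    have "inj_on s ?X1" using m by (auto simp: inj_on_def)
    then show ?thesis using f2_pair.linear_sum[OF lin, of "\<lambda>x. x" ?X1] by (simp add: sum.reindex)
  qed
  moreover have "s ` ?X1 \<subseteq> R" "finite (s ` ?X1)" using m X(1) by auto
  ultimately have X1: "?X1 = {}" using R unfolding f2_independent_iff_sums by auto
  then have "?X2 = X" by blast
  then have "\<Sum>?X2 = 0" "?X2 \<subseteq> K" "finite ?X2" using X by auto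
  then have "?X2 = {}" using K(1) unfolding f2_independent_iff_sums by blast
  then show "X = {}" using X1 by blast
qed

lemma f2_lifts_Un_kernel_spanning:
  assumes lin: "f2_linear (s::'v::f2_space \<Rightarrow> 'v)"
    and R: "f2.span R = range s" and K: "f2.span K = {x. s x = 0}"
    and m: "\<And>b. b \<in> R \<Longrightarrow> s (m b) = b"
  shows "f2.span (m ` R \<union> K) = UNIV"
proof (intro Set.set_eqI iffI)
  fix v :: 'v
  have "s v \<in> f2.span R" using R by simp
  then obtain Y where Y: "finite Y" "Y \<subseteq> R" "s v = \<Sum>Y" unfolding f2_span_eq_sums by blast
  let ?x = "\<Sum>(m ` Y)"
  have "s ?x = (\<Sum>y\<in>m ` Y. s y)" using f2_pair.linear_sum[OF lin, of "\<lambda>x. x"] by simp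
  also have "\<dots> = \<Sum>Y"
  proof -
    have "inj_on m Y" using Y(2) m by (metis inj_onI subsetD)
    then show ?thesis using Y(2) m by (simp add: sum.reindex subset_iff)
  qed
  finally have "v + ?x \<in> f2.span K" using Y(3) K f2_pair.linear_add[OF lin] by simp
  moreover have "?x \<in> f2.span (m ` R)" using Y by (intro f2.span_sum) (auto intro: f2.span_base)
  ultimately have "?x + (v + ?x) \<in> f2.span (m ` R \<union> K)" unfolding f2.span_Un by blast
  then show "v \<in> f2.span (m ` R \<union> K)" by (simp add: add.left_commute)
qed simp

section \<open>Endomorphisms of square zero\<close>

text \<open>For an involution \<open>\<sigma>\<close> of an \<open>\<bbbF>\<^sub>2\<close>-space and \<open>s = 1 + \<sigma>\<close>, a choice of bases as below exhibits
  the \<open>\<bbbF>\<^sub>2[G]\<close>-module as a direct sum of \<open>|R|\<close> free modules and \<open>|C|\<close> trivial ones.\<close>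

definition image_kernel_bases :: "('v::f2_space \<Rightarrow> 'v) \<Rightarrow> 'v set \<Rightarrow> 'v set \<Rightarrow> bool" where
  "image_kernel_bases s R C \<longleftrightarrow> f2.independent (R \<union> C) \<and> R \<inter> C = {} \<and>
     f2.span R = range s \<and> f2.span (R \<union> C) = {x. s x = 0}"

definition commuting_iso :: "('v::f2_space \<Rightarrow> 'v) \<Rightarrow> ('w::f2_space \<Rightarrow> 'w) \<Rightarrow> ('v \<Rightarrow> 'w) \<Rightarrow> bool" where
  "commuting_iso s1 s2 \<phi> \<longleftrightarrow> f2_linear \<phi> \<and> bij \<phi> \<and> (\<forall>x. \<phi> (s1 x) = s2 (\<phi> x))"

lemma commuting_iso_image:
  assumes "commuting_iso s1 s2 \<phi>" "f2_linear s1"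
  shows "\<phi> ` range s1 = range s2" and "\<phi> ` {x. s1 x = 0} = {y. s2 y = 0}"
proof -
  have \<phi>: "f2_linear \<phi>" "bij \<phi>" "\<And>x. \<phi> (s1 x) = s2 (\<phi> x)"
    using assms(1) unfolding commuting_iso_def by auto
  have "\<phi> ` range s1 = s2 ` range \<phi>" using \<phi>(3) by (auto simp: image_iff)
  then show "\<phi> ` range s1 = range s2" using \<phi>(2) by (simp add: bij_def)
  have "s1 x = 0 \<longleftrightarrow> s2 (\<phi> x) = 0" for x
    using \<phi> f2_pair.linear_0 by (metis bij_def injD)
  then show "\<phi> ` {x. s1 x = 0} = {y. s2 y = 0}"
    using \<phi>(2) by (auto simp: bij_def)
qed

lemma commuting_iso_imp_eqpoll:
  assumes lin: "f2_linear s1" and \<phi>: "commuting_iso s1 s2 \<phi>"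
    and B1: "image_kernel_bases s1 R1 C1" and B2: "image_kernel_bases s2 R2 C2"
  shows "R1 \<approx> R2" "C1 \<approx> C2"
proof -
  have lin\<phi>: "f2_linear \<phi>" and inj: "inj_on \<phi> A" for A
    using \<phi> unfolding commuting_iso_def by (auto simp: bij_def intro: inj_on_subset)
  note image = commuting_iso_image[OF \<phi> lin]
  have ind: "f2.independent (\<phi> ` R1 \<union> \<phi> ` C1)" "f2.independent (\<phi> ` R1)"
    using f2_pair.linear_independent_injective_image[OF lin\<phi>, of "R1 \<union> C1"] B1 inj
      f2.independent_mono unfolding image_kernel_bases_def image_Un by blast+
  have span: "f2.span (\<phi> ` R1) = f2.span R2" "f2.span (\<phi> ` R1 \<union> \<phi> ` C1) = f2.span (R2 \<union> C2)"
    using f2_pair.linear_span_image[OF lin\<phi>] image B1 B2 unfolding image_kernel_bases_def image_Un[symmetric]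
    by simp_all
  have "R1 \<approx> \<phi> ` R1" using inj eqpoll_sym inj_on_image_eqpoll_self by blast
  also have "\<phi> ` R1 \<approx> R2"
    using f2.bij_if_span_eq_span_bases[OF ind(2) _ span(1)] B2 f2.independent_mono
    unfolding image_kernel_bases_def eqpoll_def by blast
  finally show "R1 \<approx> R2" .
  have "C1 \<approx> \<phi> ` C1" using inj eqpoll_sym inj_on_image_eqpoll_self by blast
  also have "\<phi> ` C1 \<approx> C2"
  proof (rule f2_complement_eqpoll[OF ind(1) _ _ _ span])
    show "\<phi> ` R1 \<inter> \<phi> ` C1 = {}"
      using B1 image_Int[OF inj[of UNIV], of R1 C1] unfolding image_kernel_bases_def by auto
  qed (use B2 in \<open>auto simp: image_kernel_bases_def\<close>)
  finally show "C1 \<approx> C2" .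
qed

lemma image_kernel_basesD:
  assumes "image_kernel_bases s R C"
  shows "f2.independent R" "R \<subseteq> range s" "R \<union> C \<subseteq> {x. s x = 0}"
  using assms f2.independent_mono f2.span_superset[of R] f2.span_superset[of "R \<union> C"]
  unfolding image_kernel_bases_def by (simp_all add: subset_iff) blast

lemma image_kernel_bases_lift_basis:
  assumes lin: "f2_linear s" and B: "image_kernel_bases s R C"
  obtains m where "\<And>b. b \<in> R \<Longrightarrow> s (m b) = b" "inj_on m R"
    "f2.independent (m ` R \<union> (R \<union> C))" "f2.span (m ` R \<union> (R \<union> C)) = UNIV" "m ` R \<inter> (R \<union> C) = {}"
proof -
  note BD = image_kernel_basesD[OF B]
  have "\<forall>b\<in>R. \<exists>x. s x = b" using BD(2) by blast
  then obtain m where m: "\<And>b. b \<in> R \<Longrightarrow> s (m b) = b" by metis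
  have "m ` R \<inter> (R \<union> C) = {}"
  proof -
    have "b = 0" if "b \<in> R" "m b \<in> R \<union> C" for b
      using that m[of b] BD(3) by auto
    then show ?thesis using BD(1) f2.dependent_zero by blast
  qed
  moreover have "f2.independent (m ` R \<union> (R \<union> C))"
    using f2_lifts_Un_kernel_independent[OF lin BD(1) _ BD(3) m] B
    unfolding image_kernel_bases_def by blast
  moreover have "f2.span (m ` R \<union> (R \<union> C)) = UNIV"
    using f2_lifts_Un_kernel_spanning[OF lin _ _ m] B unfolding image_kernel_bases_def by blast
  moreover have "inj_on m R" using m by (metis inj_onI)
  ultimately show ?thesis using that m by blast
qed

lemma bij_betw_extend_to_lifts:
  assumes h: "bij_betw h R1 R2" and k: "bij_betw k C1 C2" and disj: "R1 \<inter> C1 = {}" "R2 \<inter> C2 = {}"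
    and m1: "inj_on m1 R1" "m1 ` R1 \<inter> (R1 \<union> C1) = {}"
    and m2: "inj_on m2 R2" "m2 ` R2 \<inter> (R2 \<union> C2) = {}"
  obtains g where "bij_betw g (m1 ` R1 \<union> (R1 \<union> C1)) (m2 ` R2 \<union> (R2 \<union> C2))"
    "\<And>x. x \<in> R1 \<union> C1 \<Longrightarrow> g x \<in> R2 \<union> C2" "\<And>c. c \<in> R1 \<Longrightarrow> g c = h c"
    "\<And>c. c \<in> R1 \<Longrightarrow> g (m1 c) = m2 (h c)"
proof
  define g where
    "g x = (if x \<in> R1 then h x else if x \<in> C1 then k x else m2 (h (inv_into R1 m1 x)))" for x
  have "bij_betw g R1 R2" using h by (rule bij_betw_cong[THEN iffD1, rotated]) (simp add: g_def)
  moreover have "bij_betw g C1 C2"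
    using k by (rule bij_betw_cong[THEN iffD1, rotated]) (use disj in \<open>auto simp: g_def\<close>)
  ultimately have "bij_betw g (R1 \<union> C1) (R2 \<union> C2)" using disj(2) by (rule bij_betw_combine)
  moreover have "bij_betw g (m1 ` R1) (m2 ` R2)"
  proof -
    have "bij_betw (m2 \<circ> h \<circ> inv_into R1 m1) (m1 ` R1) (m2 ` R2)"
      using m1(1) m2(1) h by (meson bij_betw_imageI bij_betw_inv_into bij_betw_trans)
    then show ?thesis
      by (rule bij_betw_cong[THEN iffD1, rotated]) (use m1(2) in \<open>auto simp: g_def\<close>)
  qed
  ultimately show "bij_betw g (m1 ` R1 \<union> (R1 \<union> C1)) (m2 ` R2 \<union> (R2 \<union> C2))"
    using m2(2) by (metis bij_betw_combine Int_commute Un_commute)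
  show "g x \<in> R2 \<union> C2" if "x \<in> R1 \<union> C1" for x
    using that h k bij_betwE by (auto simp: g_def)
  show "g c = h c" if "c \<in> R1" for c using that by (simp add: g_def)
  show "g (m1 c) = m2 (h c)" if "c \<in> R1" for c using that m1 by (auto simp: g_def)
qed

lemma eqpoll_imp_commuting_iso:
  assumes lin1: "f2_linear s1" and lin2: "f2_linear s2"
    and B1: "image_kernel_bases s1 R1 C1" and B2: "image_kernel_bases s2 R2 C2"
    and "R1 \<approx> R2" "C1 \<approx> C2"
  shows "\<exists>\<phi>. commuting_iso s1 s2 \<phi>"
proof -
  obtain h k where h: "bij_betw h R1 R2" and k: "bij_betw k C1 C2"
    using assms(5,6) unfolding eqpoll_def by blast
  obtain m1 where m1: "\<And>b. b \<in> R1 \<Longrightarrow> s1 (m1 b) = b" "inj_on m1 R1"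
    "f2.independent (m1 ` R1 \<union> (R1 \<union> C1))" "f2.span (m1 ` R1 \<union> (R1 \<union> C1)) = UNIV"
    "m1 ` R1 \<inter> (R1 \<union> C1) = {}"
    using image_kernel_bases_lift_basis[OF lin1 B1] by blast
  obtain m2 where m2: "\<And>b. b \<in> R2 \<Longrightarrow> s2 (m2 b) = b" "inj_on m2 R2"
    "f2.independent (m2 ` R2 \<union> (R2 \<union> C2))" "f2.span (m2 ` R2 \<union> (R2 \<union> C2)) = UNIV"
    "m2 ` R2 \<inter> (R2 \<union> C2) = {}"
    using image_kernel_bases_lift_basis[OF lin2 B2] by blast
  have "R1 \<inter> C1 = {}" "R2 \<inter> C2 = {}"
    using B1 B2 unfolding image_kernel_bases_def by simp_all
  then obtain g where g: "bij_betw g (m1 ` R1 \<union> (R1 \<union> C1)) (m2 ` R2 \<union> (R2 \<union> C2))"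
    "\<And>x. x \<in> R1 \<union> C1 \<Longrightarrow> g x \<in> R2 \<union> C2" "\<And>c. c \<in> R1 \<Longrightarrow> g c = h c"
    "\<And>c. c \<in> R1 \<Longrightarrow> g (m1 c) = m2 (h c)"
    using bij_betw_extend_to_lifts[OF h k _ _ m1(2,5) m2(2,5)] by blast
  obtain \<phi> where \<phi>: "f2_linear \<phi>" "bij \<phi>" "\<And>x. x \<in> m1 ` R1 \<union> (R1 \<union> C1) \<Longrightarrow> \<phi> x = g x"
    using f2_linear_bij_extend[OF m1(3,4) m2(3,4) g(1)] by blast
  have "\<phi> (s1 b) = s2 (\<phi> b)" if b: "b \<in> m1 ` R1 \<union> (R1 \<union> C1)" for b
  proof (cases "b \<in> R1 \<union> C1")
    case True
    then have "\<phi> b \<in> R2 \<union> C2" using \<phi>(3)[OF b] g(2) by simp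
    then have "s1 b = 0" "s2 (\<phi> b) = 0"
      using True image_kernel_basesD(3)[OF B1] image_kernel_basesD(3)[OF B2] by auto
    then show ?thesis using f2_pair.linear_0[OF \<phi>(1)] by simp
  next
    case False
    then obtain c where c: "c \<in> R1" "b = m1 c" using b by blast
    then show ?thesis using m1(1) m2(1) \<phi>(3) b g(3,4) h by (simp add: bij_betwE)
  qed
  then have "\<phi> (s1 x) = s2 (\<phi> x)" for x
    using f2_pair.linear_eq_on[of "\<phi> \<circ> s1" "s2 \<circ> \<phi>" x "m1 ` R1 \<union> (R1 \<union> C1)"] m1(4) \<phi>(1) lin1 lin2
    by (simp add: Vector_Spaces.linear_compose)
  then show ?thesis using \<phi>(1,2) unfolding commuting_iso_def by blast
qed

lemma commuting_iso_iff_eqpoll: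
  assumes "f2_linear s1" "f2_linear s2" "image_kernel_bases s1 R1 C1" "image_kernel_bases s2 R2 C2"
  shows "(\<exists>\<phi>. commuting_iso s1 s2 \<phi>) \<longleftrightarrow> R1 \<approx> R2 \<and> C1 \<approx> C2"
  using commuting_iso_imp_eqpoll eqpoll_imp_commuting_iso assms by metis

lemma commuting_iso_add_id_iff:
  "commuting_iso (\<lambda>x. t1 x + x) (\<lambda>y. t2 y + y) \<phi> \<longleftrightarrow> commuting_iso t1 t2 \<phi>"
  unfolding commuting_iso_def by (auto simp: f2_pair.linear_add)

section \<open>Square classes of a field\<close>

definition same_square_class :: "'a::field \<Rightarrow> 'a \<Rightarrow> bool" where
  "same_square_class x y \<longleftrightarrow> x \<noteq> 0 \<and> y \<noteq> 0 \<and> (\<exists>w. x = y * w * w)"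

lemma part_equivp_same_square_class: "part_equivp (same_square_class :: 'a::field \<Rightarrow> 'a \<Rightarrow> bool)"
proof (rule part_equivpI)
  show "\<exists>x::'a. same_square_class x x"
    by (rule exI[of _ 1]) (auto simp: same_square_class_def intro: exI[of _ 1])
  show "symp (same_square_class :: 'a \<Rightarrow> 'a \<Rightarrow> bool)"
  proof (rule sympI)
    fix x y :: 'a assume "same_square_class x y"
    then obtain w where "x \<noteq> 0" "y \<noteq> 0" "x = y * w * w" by (auto simp: same_square_class_def)
    then have "y = x * (1/w) * (1/w)" by (simp add: field_simps)
    then show "same_square_class y x"
      unfolding same_square_class_def using \<open>x \<noteq> 0\<close> \<open>y \<noteq> 0\<close> by blast
  qed
  show "transp (same_square_class :: 'a \<Rightarrow> 'a \<Rightarrow> bool)"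
  proof (rule transpI)
    fix x y z :: 'a assume "same_square_class x y" "same_square_class y z"
    then obtain w v where "x \<noteq> 0" "z \<noteq> 0" "x = y * w * w" "y = z * v * v"
      by (auto simp: same_square_class_def)
    then have "x = z * (v * w) * (v * w)" by (simp add: algebra_simps)
    then show "same_square_class x z"
      unfolding same_square_class_def using \<open>x \<noteq> 0\<close> \<open>z \<noteq> 0\<close> by blast
  qed
qed

quotient_type (overloaded) 'a sqclass = "'a::field" / partial: same_square_class
  by (rule part_equivp_same_square_class)

lemma same_square_class_mult:
  "same_square_class x x' \<Longrightarrow> same_square_class y y' \<Longrightarrow> same_square_class (x * y) (x' * y')"
proof -
  assume "same_square_class x x'" "same_square_class y y'"
  then obtain w v where "x \<noteq> 0" "x' \<noteq> 0" "y \<noteq> 0" "y' \<noteq> 0" "x = x' * w * w" "y = y' * v * v"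
    by (auto simp: same_square_class_def)
  then show ?thesis unfolding same_square_class_def by (auto intro!: exI[of _ "w * v"] simp: algebra_simps)
qed

lemma same_square_class_square: "x \<noteq> 0 \<Longrightarrow> same_square_class (x * x) (1::'a::field)"
  unfolding same_square_class_def by (auto intro!: exI[of _ x])

instantiation sqclass :: (field) f2_space
begin
lift_definition zero_sqclass :: "'a sqclass" is 1
  by (auto simp: same_square_class_def intro: exI[of _ 1])
lift_definition plus_sqclass :: "'a sqclass \<Rightarrow> 'a sqclass \<Rightarrow> 'a sqclass" is "\<lambda>x y. x * y"
  by (rule same_square_class_mult)
lift_definition minus_sqclass :: "'a sqclass \<Rightarrow> 'a sqclass \<Rightarrow> 'a sqclass" is "\<lambda>x y. x * y"
  by (rule same_square_class_mult)
lift_definition uminus_sqclass :: "'a sqclass \<Rightarrow> 'a sqclass" is "\<lambda>x. x" .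
instance
proof
  fix a b c :: "'a sqclass"
  show "a + b + c = a + (b + c)" by transfer (auto simp: same_square_class_def intro: exI[of _ 1])
  show "a + b = b + a" by transfer (auto simp: same_square_class_def intro: exI[of _ 1])
  show "0 + a = a" by transfer (auto simp: same_square_class_def intro: exI[of _ 1])
  show "a - b = a + - b" by transfer (auto simp: same_square_class_def intro: exI[of _ 1])
  show "- a + a = 0" by transfer (metis same_square_class_def same_square_class_square)
  show "a + a = 0" by transfer (metis same_square_class_def same_square_class_square)
qed
end

text \<open>\<open>sqclass 0\<close> is the junk value \<open>0\<close>, the class of \<open>1\<close>.\<close>

lift_definition sqclass :: "'a::field \<Rightarrow> 'a sqclass" is "\<lambda>x. if x = 0 then 1 else x"
  by (auto simp: same_square_class_def intro: exI[of _ 1])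

lemma sqclass_eq_iff: "x \<noteq> 0 \<Longrightarrow> y \<noteq> 0 \<Longrightarrow> sqclass x = sqclass y \<longleftrightarrow> (\<exists>w. x = y * w * w)"
  by transfer (auto simp: same_square_class_def)

lemma sqclass_mult: "x \<noteq> 0 \<Longrightarrow> y \<noteq> 0 \<Longrightarrow> sqclass x + sqclass y = sqclass (x * y)"
  by transfer (auto simp: same_square_class_def intro: exI[of _ 1])

lemma sqclass_1 [simp]: "sqclass 1 = 0"
  by transfer (auto simp: same_square_class_def intro: exI[of _ 1])

lemma sqclass_surj: "\<exists>x. x \<noteq> 0 \<and> q = sqclass x"
proof transfer
  fix q :: 'a assume "same_square_class q q"
  then show "\<exists>x. x \<noteq> 0 \<and> same_square_class q (if x = 0 then 1 else x)"
    by (intro exI[of _ q]) (auto simp: same_square_class_def intro: exI[of _ 1])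
qed

lemma sqclass_cases: obtains x where "x \<noteq> 0" "q = sqclass x"
  using sqclass_surj by blast

lemma sqclass_eq_0_iff: "x \<noteq> 0 \<Longrightarrow> sqclass x = 0 \<longleftrightarrow> (\<exists>w. x = w * w)"
  using sqclass_eq_iff[of x 1] by simp

definition nonzero_mult_hom :: "('a::field \<Rightarrow> 'b::field) \<Rightarrow> bool" where
  "nonzero_mult_hom f \<longleftrightarrow> (\<forall>x y. f (x * y) = f x * f y) \<and> (\<forall>x. x \<noteq> 0 \<longrightarrow> f x \<noteq> 0)"

definition sqclass_map :: "('a::field \<Rightarrow> 'b::field) \<Rightarrow> 'a sqclass \<Rightarrow> 'b sqclass" where
  "sqclass_map f q = sqclass (f (SOME x. x \<noteq> 0 \<and> q = sqclass x))"

lemma sqclass_map_sqclass: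
  assumes f: "nonzero_mult_hom f" and x: "x \<noteq> 0"
  shows "sqclass_map f (sqclass x) = sqclass (f x)"
proof -
  define x' where "x' = (SOME x'. x' \<noteq> 0 \<and> sqclass x = sqclass x')"
  have x': "x' \<noteq> 0" "sqclass x = sqclass x'"
    unfolding x'_def using someI_ex[OF sqclass_surj[of "sqclass x"]] by auto
  then obtain w where "x' = x * w * w" using sqclass_eq_iff x by metis
  then have "f x' = f x * f w * f w" "f x \<noteq> 0" "f x' \<noteq> 0"
    using f x x' by (auto simp: nonzero_mult_hom_def)
  then have "sqclass (f x') = sqclass (f x)" using sqclass_eq_iff by metis
  then show ?thesis unfolding sqclass_map_def x'_def[symmetric] by simp
qed

lemma sqclass_map_linear:
  fixes f :: "'a::field \<Rightarrow> 'b::field"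
  assumes f: "nonzero_mult_hom f" shows "f2_linear (sqclass_map f)"
  unfolding f2_linear_iff_additive
proof (intro allI)
  fix p q :: "'a sqclass"
  obtain x y where "x \<noteq> 0" "y \<noteq> 0" "p = sqclass x" "q = sqclass y" by (metis sqclass_cases)
  moreover from this have "f x \<noteq> 0" "f y \<noteq> 0" using f by (auto simp: nonzero_mult_hom_def)
  ultimately show "sqclass_map f (p + q) = sqclass_map f p + sqclass_map f q"
    using f by (simp add: sqclass_mult sqclass_map_sqclass nonzero_mult_hom_def)
qed

section \<open>Quadratic extensions\<close>

locale quadratic_ext =
  fixes \<iota> :: "'a::field \<Rightarrow> 'k::field" and a :: 'a and r :: 'k and \<sigma> :: "'k \<Rightarrow> 'k"
  assumes char_not_2: "(2::'a) \<noteq> 0" and a_nonzero: "a \<noteq> 0" and a_nonsquare: "a \<notin> squares_of_field"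
    and ext: "quad_ext \<iota> a r" and gal: "gal_generator \<iota> \<sigma>"
begin

lemma emb_add: "\<iota> (x + y) = \<iota> x + \<iota> y" using ext by (simp add: quad_ext_def)
lemma emb_mult: "\<iota> (x * y) = \<iota> x * \<iota> y" using ext by (simp add: quad_ext_def)
lemma emb_1: "\<iota> 1 = 1" using ext by (simp add: quad_ext_def)
lemma r_square: "r * r = \<iota> a" using ext by (simp add: quad_ext_def)
lemma ext_repr: "\<exists>x y. z = \<iota> x + \<iota> y * r" using ext by (simp add: quad_ext_def)
lemma gal_add: "\<sigma> (x + y) = \<sigma> x + \<sigma> y" using gal by (simp add: gal_generator_def)
lemma gal_mult: "\<sigma> (x * y) = \<sigma> x * \<sigma> y" using gal by (simp add: gal_generator_def)
lemma gal_emb: "\<sigma> (\<iota> x) = \<iota> x" using gal by (simp add: gal_generator_def)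
lemma gal_bij: "bij \<sigma>" using gal by (simp add: gal_generator_def)

lemma emb_0: "\<iota> 0 = 0" using emb_add[of 0 0] by (metis add_cancel_right_right)
lemma emb_minus: "\<iota> (- x) = - \<iota> x"
  using emb_add[of x "- x"] emb_0 by (simp add: eq_neg_iff_add_eq_0 add.commute)
lemma emb_diff: "\<iota> (x - y) = \<iota> x - \<iota> y" using emb_add[of x "- y"] by (simp add: emb_minus)
lemma emb_nonzero: "x \<noteq> 0 \<Longrightarrow> \<iota> x \<noteq> 0" using emb_mult[of x "1 / x"] by (auto simp: emb_1)
lemma emb_eq_iff: "\<iota> x = \<iota> y \<longleftrightarrow> x = y" using emb_diff[of x y] emb_nonzero[of "x - y"] by auto
lemma emb_divide: "\<iota> (x / y) = \<iota> x / \<iota> y"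
  by (cases "y = 0") (auto simp: emb_0 emb_nonzero emb_mult[symmetric] emb_1 field_simps
      dest: emb_nonzero intro: emb_eq_iff[THEN iffD1])
lemma emb_2: "\<iota> 2 = 2" using emb_add[of 1 1] by (simp add: emb_1)

lemma gal_0: "\<sigma> 0 = 0" using gal_add[of 0 0] by (metis add_cancel_right_right)
lemma gal_1: "\<sigma> 1 = 1" using gal_emb[of 1] by (simp add: emb_1)
lemma gal_nonzero: "z \<noteq> 0 \<Longrightarrow> \<sigma> z \<noteq> 0" using gal_bij gal_0 by (metis bij_def inj_eq)
lemma gal_divide: "\<sigma> (z / w) = \<sigma> z / \<sigma> w"
  using gal_mult[of "z / w" w] by (cases "w = 0") (auto simp: gal_0 gal_nonzero field_simps)

lemma a_not_square: "a \<noteq> c * c" using a_nonsquare a_nonzero by (auto simp: squares_of_field_def)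

lemma r_nonzero: "r \<noteq> 0" using r_square emb_nonzero a_nonzero by force

lemma emb_linear_independent: "\<iota> x + \<iota> y * r = 0 \<Longrightarrow> x = 0 \<and> y = 0"
proof (cases "y = 0")
  case True
  then show "\<iota> x + \<iota> y * r = 0 \<Longrightarrow> ?thesis" using emb_0 emb_nonzero by force
next
  case False
  assume "\<iota> x + \<iota> y * r = 0"
  then have "- \<iota> x = \<iota> y * r" using neg_eq_iff_add_eq_0 by blast
  then have "r = \<iota> (- x / y)" using emb_nonzero[OF False] by (simp add: emb_divide emb_minus field_simps)
  then have "\<iota> a = \<iota> ((- x / y) * (- x / y))" using r_square by (simp only: emb_mult)
  then show ?thesis using a_not_square emb_eq_iff by blast
qed

lemma gal_r: "\<sigma> r = - r"
proof -
  have "\<sigma> r \<noteq> r"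
  proof
    assume "\<sigma> r = r"
    then have "\<sigma> z = z" for z using ext_repr[of z] by (auto simp: gal_add gal_mult gal_emb)
    then show False using gal unfolding gal_generator_def by auto
  qed
  moreover have "(\<sigma> r - r) * (\<sigma> r + r) = 0"
    using gal_mult[of r r] r_square gal_emb by (simp add: algebra_simps)
  ultimately show ?thesis by (simp add: eq_neg_iff_add_eq_0)
qed

lemma norm_in_base: "\<exists>x. z * \<sigma> z = \<iota> x"
proof -
  obtain x y where z: "z = \<iota> x + \<iota> y * r" using ext_repr by blast
  have "z * \<sigma> z = \<iota> x * \<iota> x - \<iota> y * \<iota> y * (r * r)"
    unfolding z by (simp add: gal_add gal_mult gal_emb gal_r algebra_simps)
  then show ?thesis by (metis r_square emb_mult emb_diff)
qed

text \<open>\<open>(u + v r)\<^sup>2 \<in> F\<close> forces \<open>2 u v = 0\<close>, hence \<open>u = 0\<close> or \<open>v = 0\<close>.\<close>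

lemma square_in_base: assumes "\<iota> x = w * w" shows "(\<exists>c. x = c * c) \<or> (\<exists>c. x = a * c * c)"
proof -
  obtain u v where w: "w = \<iota> u + \<iota> v * r" using ext_repr by blast
  have "w * w = \<iota> (u * u + a * v * v) + \<iota> (2 * u * v) * r"
    unfolding w by (simp add: r_square[symmetric] emb_add emb_mult emb_2 algebra_simps)
  then have "\<iota> (u * u + a * v * v - x) + \<iota> (2 * u * v) * r = 0"
    using assms by (simp add: emb_diff algebra_simps)
  then have "u * u + a * v * v - x = 0" "2 * u * v = 0" using emb_linear_independent by blast+
  then show ?thesis using char_not_2 by (auto simp: algebra_simps)
qed

lemma hilbert90: assumes "w * \<sigma> w = 1" shows "\<exists>u. u \<noteq> 0 \<and> w * u = \<sigma> u"
proof (cases "w = -1")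
  case True
  then show ?thesis using r_nonzero gal_r by (intro exI[of _ r]) simp
next
  case False
  then have "1 + w \<noteq> 0" by (metis add.commute add_eq_0_iff)
  moreover have "w \<noteq> 0" using assms by auto
  moreover from this have "\<sigma> w = 1 / w" using assms by (simp add: field_simps)
  then have "\<sigma> (1 / (1 + w)) = 1 / (1 + 1 / w)" by (simp add: gal_divide gal_add gal_1)
  ultimately have "\<sigma> (1 / (1 + w)) = w * (1 / (1 + w))" by (simp add: field_simps add.commute)
  then show ?thesis using \<open>1 + w \<noteq> 0\<close> by (intro exI[of _ "1 / (1 + w)"]) simp
qed


section \<open>The square classes of \<open>K\<close> as a module\<close>

definition ext_sq :: "'a sqclass \<Rightarrow> 'k sqclass" where
  "ext_sq = sqclass_map \<iota>"

definition norm_sq :: "'k sqclass \<Rightarrow> 'k sqclass" where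
  "norm_sq q = sqclass_map \<sigma> q + q"

definition norm_classes :: "'a sqclass set" where
  "norm_classes = sqclass ` norm_group \<iota> \<sigma>"

lemma nonzero_mult_hom_emb: "nonzero_mult_hom \<iota>"
  using emb_mult emb_nonzero by (simp add: nonzero_mult_hom_def)

lemma nonzero_mult_hom_gal: "nonzero_mult_hom \<sigma>"
  using gal_mult gal_nonzero by (simp add: nonzero_mult_hom_def)

lemma ext_sq_linear: "f2_linear ext_sq"
  unfolding ext_sq_def by (rule sqclass_map_linear[OF nonzero_mult_hom_emb])

lemma norm_sq_linear: "f2_linear norm_sq"
  using sqclass_map_linear[OF nonzero_mult_hom_gal]
  unfolding f2_linear_iff_additive norm_sq_def by (simp add: add_ac)

lemma ext_sq_sqclass: "x \<noteq> 0 \<Longrightarrow> ext_sq (sqclass x) = sqclass (\<iota> x)"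
  unfolding ext_sq_def by (rule sqclass_map_sqclass[OF nonzero_mult_hom_emb])

lemma norm_sq_sqclass: "z \<noteq> 0 \<Longrightarrow> norm_sq (sqclass z) = sqclass (z * \<sigma> z)"
  unfolding norm_sq_def
  by (simp add: sqclass_map_sqclass[OF nonzero_mult_hom_gal] sqclass_mult gal_nonzero mult.commute)

lemma norm_group_nonzero: "x \<in> norm_group \<iota> \<sigma> \<Longrightarrow> x \<noteq> 0"
  unfolding norm_group_def using emb_0 gal_nonzero by force

lemma norm_group_mult:
  assumes "x \<in> norm_group \<iota> \<sigma>" "y \<in> norm_group \<iota> \<sigma>" shows "x * y \<in> norm_group \<iota> \<sigma>"
proof -
  obtain z w where "z \<noteq> 0" "\<iota> x = z * \<sigma> z" "w \<noteq> 0" "\<iota> y = w * \<sigma> w"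
    using assms unfolding norm_group_def by blast
  then have "z * w \<noteq> 0" "\<iota> (x * y) = (z * w) * \<sigma> (z * w)" by (simp_all add: emb_mult gal_mult ac_simps)
  then show ?thesis unfolding norm_group_def by blast
qed

lemma norm_group_inverse:
  assumes "x \<in> norm_group \<iota> \<sigma>" shows "1 / x \<in> norm_group \<iota> \<sigma>"
proof -
  obtain z where "z \<noteq> 0" "\<iota> x = z * \<sigma> z" using assms unfolding norm_group_def by blast
  then have "1 / z \<noteq> 0" "\<iota> (1 / x) = (1 / z) * \<sigma> (1 / z)" by (simp_all add: emb_divide emb_1 gal_divide gal_1)
  then show ?thesis unfolding norm_group_def by blast
qed

lemma norm_group_square: "c \<noteq> 0 \<Longrightarrow> c * c \<in> norm_group \<iota> \<sigma>"
  unfolding norm_group_def by (auto simp: emb_nonzero gal_emb emb_mult intro!: exI[of _ "\<iota> c"])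

lemma neg_a_in_norm_group: "- a \<in> norm_group \<iota> \<sigma>"
  unfolding norm_group_def using r_nonzero by (auto simp: gal_r r_square emb_minus intro!: exI[of _ r])

lemma norm_classes_subspace: "f2.subspace norm_classes"
  unfolding f2.subspace_def
proof (intro conjI ballI allI)
  show "0 \<in> norm_classes"
    unfolding norm_classes_def using norm_group_square[of 1] by force
  fix x y assume "x \<in> norm_classes" "y \<in> norm_classes"
  then obtain u v where uv: "u \<in> norm_group \<iota> \<sigma>" "v \<in> norm_group \<iota> \<sigma>" "x = sqclass u" "y = sqclass v"
    unfolding norm_classes_def by blast
  then have "x + y = sqclass (u * v)" using sqclass_mult norm_group_nonzero by blast
  then show "x + y \<in> norm_classes"
    unfolding norm_classes_def using norm_group_mult[OF uv(1,2)] by blast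
next
  fix c x assume "x \<in> norm_classes"
  then show "scaleF2 c x \<in> norm_classes"
    unfolding norm_classes_def using norm_group_square[of 1] by (force simp: scaleF2_def)
qed

lemma range_norm_sq: "range norm_sq = ext_sq ` norm_classes"
proof (intro Set.set_eqI iffI)
  fix q assume "q \<in> range norm_sq"
  then obtain z where z: "z \<noteq> 0" "q = norm_sq (sqclass z)" by (metis rangeE sqclass_cases)
  obtain x where x: "z * \<sigma> z = \<iota> x" using norm_in_base by blast
  then have "x \<in> norm_group \<iota> \<sigma>" unfolding norm_group_def using z by auto
  moreover from this have "q = ext_sq (sqclass x)"
    using z x norm_group_nonzero by (simp add: norm_sq_sqclass ext_sq_sqclass)
  ultimately show "q \<in> ext_sq ` norm_classes" unfolding norm_classes_def by blast
next
  fix q assume "q \<in> ext_sq ` norm_classes"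
  then obtain x where x: "x \<in> norm_group \<iota> \<sigma>" "q = ext_sq (sqclass x)" unfolding norm_classes_def by blast
  then obtain z where "z \<noteq> 0" "\<iota> x = z * \<sigma> z" unfolding norm_group_def by blast
  then have "q = norm_sq (sqclass z)" using x norm_group_nonzero by (simp add: norm_sq_sqclass ext_sq_sqclass)
  then show "q \<in> range norm_sq" by blast
qed

lemma sqclass_a_nonzero: "sqclass a \<noteq> 0"
  using sqclass_eq_0_iff[OF a_nonzero] a_not_square by blast

lemma ext_sq_eq_0_iff: "ext_sq q = 0 \<longleftrightarrow> q = 0 \<or> q = sqclass a"
proof -
  obtain x where x: "x \<noteq> 0" "q = sqclass x" using sqclass_cases by blast
  have "ext_sq q = 0 \<longleftrightarrow> (\<exists>w. \<iota> x = w * w)" using x by (simp add: ext_sq_sqclass sqclass_eq_0_iff emb_nonzero)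
  also have "\<dots> \<longleftrightarrow> (\<exists>c. x = c * c) \<or> (\<exists>c. x = a * c * c)"
  proof
    assume "(\<exists>c. x = c * c) \<or> (\<exists>c. x = a * c * c)"
    then show "\<exists>w. \<iota> x = w * w"
      by (metis emb_mult mult.assoc mult.commute r_square)
  qed (use square_in_base in blast)
  also have "\<dots> \<longleftrightarrow> q = 0 \<or> q = sqclass a"
    using x sqclass_eq_0_iff sqclass_eq_iff[OF x(1) a_nonzero] by auto
  finally show ?thesis .
qed

lemma sqclass_a_in_norm_classes_iff: "sqclass a \<in> norm_classes \<longleftrightarrow> - 1 \<in> norm_group \<iota> \<sigma>"
proof
  assume "sqclass a \<in> norm_classes"
  then obtain x w where x: "x \<in> norm_group \<iota> \<sigma>" "a = x * w * w"
    unfolding norm_classes_def using sqclass_eq_iff a_nonzero norm_group_nonzero by (metis imageE)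
  then have "a \<in> norm_group \<iota> \<sigma>"
    using a_nonzero norm_group_mult[OF x(1) norm_group_square[of w]] by (auto simp: mult.assoc)
  then have "a * (1 / (- a)) \<in> norm_group \<iota> \<sigma>"
    using norm_group_mult norm_group_inverse neg_a_in_norm_group by blast
  then show "- 1 \<in> norm_group \<iota> \<sigma>" using a_nonzero by simp
next
  assume "- 1 \<in> norm_group \<iota> \<sigma>"
  then have "(- 1) * (- a) \<in> norm_group \<iota> \<sigma>" using norm_group_mult neg_a_in_norm_group by blast
  then show "sqclass a \<in> norm_classes" unfolding norm_classes_def by simp
qed

lemma norm_sq_ext_sq: "norm_sq (ext_sq q) = 0"
proof -
  obtain x where "x \<noteq> 0" "q = sqclass x" using sqclass_cases by blast
  moreover from this have "sqclass (\<iota> x * \<iota> x) = 0"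
    using emb_nonzero sqclass_eq_0_iff by (metis mult_eq_0_iff)
  ultimately show ?thesis using emb_nonzero by (simp add: ext_sq_sqclass norm_sq_sqclass gal_emb)
qed

lemma trivial_norm_in_range_ext_sq:
  assumes "z \<noteq> 0" "c \<noteq> 0" "z * \<sigma> z = \<iota> (c * c)"
  shows "sqclass z \<in> range ext_sq"
proof -
  define w where "w = z / \<iota> c"
  have c: "\<iota> c \<noteq> 0" using emb_nonzero assms(2) by simp
  have w: "w \<noteq> 0" "z = w * \<iota> c" unfolding w_def using assms c by simp_all
  have "w * \<sigma> w = 1" unfolding w_def using assms(3) c by (simp add: gal_divide gal_emb emb_mult)
  then obtain u where u: "u \<noteq> 0" "\<sigma> u = w * u" using hilbert90 by metis
  obtain y where y: "u * \<sigma> u = \<iota> y" using norm_in_base by blast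
  have "y \<noteq> 0" using y u gal_nonzero emb_0 by (metis mult_eq_0_iff)
  have "sqclass w = sqclass (u * \<sigma> u)"
    using sqclass_eq_iff[OF _ w(1)] u gal_nonzero by (metis mult.assoc mult.commute mult_eq_0_iff)
  then have "sqclass z = ext_sq (sqclass y) + ext_sq (sqclass c)"
    using y \<open>y \<noteq> 0\<close> c assms(2) w sqclass_mult[of w "\<iota> c"] by (simp add: ext_sq_sqclass)
  also have "\<dots> = ext_sq (sqclass y + sqclass c)" using f2_pair.linear_add[OF ext_sq_linear] by metis
  finally show ?thesis by blast
qed

lemma kernel_norm_sq_cases:
  assumes "norm_sq q = 0"
  obtains z c where "z \<noteq> 0" "q = sqclass z" "c \<noteq> 0"
    "z * \<sigma> z = \<iota> (c * c) \<or> z * \<sigma> z = \<iota> (a * c * c)"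
proof -
  obtain z where z: "z \<noteq> 0" "q = sqclass z" using sqclass_cases by blast
  obtain x where x: "z * \<sigma> z = \<iota> x" using norm_in_base by blast
  have "x \<noteq> 0" using x z gal_nonzero emb_0 by (metis mult_eq_0_iff)
  have "sqclass (z * \<sigma> z) = 0" using assms z by (simp add: norm_sq_sqclass)
  then obtain w where "\<iota> x = w * w" using sqclass_eq_0_iff z gal_nonzero x by (metis mult_eq_0_iff)
  then obtain c where "x = c * c \<or> x = a * c * c" using square_in_base by blast
  moreover from this have "c \<noteq> 0" using \<open>x \<noteq> 0\<close> by auto
  ultimately show ?thesis using that z x by blast
qed

lemma kernel_norm_sq_without_minus_1:
  assumes "- 1 \<notin> norm_group \<iota> \<sigma>"
  shows "{q. norm_sq q = 0} = range ext_sq"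
proof (intro Set.set_eqI iffI)
  fix q assume "q \<in> {q. norm_sq q = 0}"
  then obtain z c where zc: "z \<noteq> 0" "q = sqclass z" "c \<noteq> 0"
    "z * \<sigma> z = \<iota> (c * c) \<or> z * \<sigma> z = \<iota> (a * c * c)" using kernel_norm_sq_cases by blast
  moreover have "z * \<sigma> z \<noteq> \<iota> (a * c * c)"
  proof
    assume n: "z * \<sigma> z = \<iota> (a * c * c)"
    define w where "w = z / (r * \<iota> c)"
    have d: "r * \<iota> c \<noteq> 0" using r_nonzero emb_nonzero zc by simp
    have "w * \<sigma> w = (z * \<sigma> z) / ((r * \<sigma> r) * (\<iota> c * \<iota> c))"
      unfolding w_def using d by (simp add: gal_divide gal_mult gal_emb algebra_simps)
    also have "\<dots> = \<iota> (- 1)" using n d emb_nonzero a_nonzero zc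
      by (simp add: gal_r r_square emb_mult emb_minus emb_1)
    finally have "\<iota> (- 1) = w * \<sigma> w" ..
    moreover have "w \<noteq> 0" unfolding w_def using zc d by simp
    ultimately have "- 1 \<in> norm_group \<iota> \<sigma>" unfolding norm_group_def by blast
    then show False using assms by blast
  qed
  ultimately show "q \<in> range ext_sq" using trivial_norm_in_range_ext_sq by blast
qed (use norm_sq_ext_sq in auto)

lemma norm_a_not_in_range_ext_sq:
  assumes e: "e \<noteq> 0" "e * \<sigma> e = \<iota> a"
  shows "sqclass e \<notin> range ext_sq"
proof
  assume "sqclass e \<in> range ext_sq"
  then obtain p where "sqclass e = ext_sq p" by blast
  moreover obtain y where y: "y \<noteq> 0" "p = sqclass y" using sqclass_cases by blast
  ultimately have "sqclass e = sqclass (\<iota> y)" by (simp add: ext_sq_sqclass)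
  then obtain v where v: "e = \<iota> y * v * v" using sqclass_eq_iff[OF e(1) emb_nonzero[OF y(1)]] by blast
  obtain t where t: "v * \<sigma> v = \<iota> t" using norm_in_base by blast
  have "\<iota> a = (\<iota> y * \<iota> y) * (v * \<sigma> v) * (v * \<sigma> v)"
    using e(2) unfolding v by (simp add: gal_mult gal_emb algebra_simps)
  also have "\<dots> = \<iota> ((y * t) * (y * t))" using t by (simp add: emb_mult algebra_simps)
  finally show False using emb_eq_iff a_not_square by blast
qed

lemma norm_a_span_kernel_norm_sq:
  assumes e: "e \<noteq> 0" "e * \<sigma> e = \<iota> a"
  shows "f2.span (insert (sqclass e) (range ext_sq)) = {q. norm_sq q = 0}"
proof
  show "{q. norm_sq q = 0} \<subseteq> f2.span (insert (sqclass e) (range ext_sq))"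
  proof
    fix q assume "q \<in> {q. norm_sq q = 0}"
    then obtain z c where zc: "z \<noteq> 0" "q = sqclass z" "c \<noteq> 0"
      "z * \<sigma> z = \<iota> (c * c) \<or> z * \<sigma> z = \<iota> (a * c * c)" using kernel_norm_sq_cases by blast
    have range: "range ext_sq \<subseteq> f2.span (insert (sqclass e) (range ext_sq))"
      by (meson f2.span_superset subset_insertI subset_trans)
    show "q \<in> f2.span (insert (sqclass e) (range ext_sq))"
    proof (cases "z * \<sigma> z = \<iota> (c * c)")
      case True
      then show ?thesis using trivial_norm_in_range_ext_sq zc range by blast
    next
      case False
      then have "(z / e) * \<sigma> (z / e) = \<iota> (c * c)"
        using zc(4) e emb_nonzero a_nonzero by (simp add: gal_divide emb_mult)
      then have "sqclass (z / e) \<in> range ext_sq"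
        using trivial_norm_in_range_ext_sq zc e(1) by simp
      moreover have "q = sqclass (z / e) + sqclass e" using zc e(1) by (simp add: sqclass_mult)
      ultimately show ?thesis using range f2.span_add f2.span_base by (metis insertI1 subsetD)
    qed
  qed
  show "f2.span (insert (sqclass e) (range ext_sq)) \<subseteq> {q. norm_sq q = 0}"
  proof (rule f2.span_minimal)
    show "f2.subspace {q. norm_sq q = 0}" by (rule f2_pair.linear_subspace_kernel[OF norm_sq_linear])
    have "norm_sq (sqclass e) = sqclass (r * r)" using e r_square by (simp add: norm_sq_sqclass)
    also have "\<dots> = 0" using sqclass_eq_0_iff[of "r * r"] r_nonzero by auto
    finally have "norm_sq (sqclass e) = 0" .
    then show "insert (sqclass e) (range ext_sq) \<subseteq> {q. norm_sq q = 0}" using norm_sq_ext_sq by auto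
  qed
qed

lemma kernel_norm_sq_with_minus_1:
  assumes "- 1 \<in> norm_group \<iota> \<sigma>"
  obtains e where "e \<notin> range ext_sq" "f2.span (insert e (range ext_sq)) = {q. norm_sq q = 0}"
proof -
  obtain w where w: "w \<noteq> 0" "\<iota> (- 1) = w * \<sigma> w" using assms unfolding norm_group_def by blast
  have "(w * r) * \<sigma> (w * r) = (w * \<sigma> w) * (r * \<sigma> r)" by (simp add: gal_mult algebra_simps)
  also have "\<dots> = \<iota> a" using w(2) by (simp add: gal_r r_square emb_minus emb_1 flip: w(2))
  finally have "(w * r) * \<sigma> (w * r) = \<iota> a" .
  moreover have "w * r \<noteq> 0" using w r_nonzero by simp
  ultimately show ?thesis
    using that norm_a_not_in_range_ext_sq norm_a_span_kernel_norm_sq by blast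
qed

lemma ext_sq_span_insert_a: "ext_sq ` f2.span (insert (sqclass a) S) = ext_sq ` f2.span S"
proof
  show "ext_sq ` f2.span (insert (sqclass a) S) \<subseteq> ext_sq ` f2.span S"
  proof
    fix v assume "v \<in> ext_sq ` f2.span (insert (sqclass a) S)"
    then obtain x y where xy: "x \<in> f2.span {sqclass a}" "y \<in> f2.span S" "v = ext_sq (x + y)"
      using f2.span_Un[of "{sqclass a}" S] by auto
    have "ext_sq x = 0"
      using xy(1) ext_sq_eq_0_iff unfolding f2.span_singleton by (auto simp: scaleF2_def)
    then show "v \<in> ext_sq ` f2.span S" using xy f2_pair.linear_add[OF ext_sq_linear] by simp
  qed
qed (intro image_mono f2.span_mono subset_insertI)

lemma ext_sq_basis_minus_a:
  assumes B: "f2.independent B" "f2.span B = UNIV" "sqclass a \<in> B"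
  shows "inj_on ext_sq (f2.span (B - {sqclass a}))" "f2.independent (ext_sq ` (B - {sqclass a}))"
    "f2.span (ext_sq ` (B - {sqclass a})) = range ext_sq"
proof -
  let ?R = "B - {sqclass a}"
  have a: "sqclass a \<notin> f2.span ?R" using B f2.dependent_def by blast
  show inj: "inj_on ext_sq (f2.span ?R)"
  proof (rule inj_onI)
    fix x y assume xy: "x \<in> f2.span ?R" "y \<in> f2.span ?R" "ext_sq x = ext_sq y"
    then have "ext_sq (x + y) = 0" using f2_pair.linear_add[OF ext_sq_linear] by simp
    moreover have "x + y \<in> f2.span ?R" using xy f2.span_add by blast
    ultimately show "x = y" using a ext_sq_eq_0_iff f2_add_eq_0_iff by metis
  qed
  show "f2.independent (ext_sq ` ?R)"
    using f2_pair.linear_independent_injective_image[OF ext_sq_linear _ inj] B f2.independent_mono by blast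
  have "insert (sqclass a) ?R = B" using B(3) by blast
  then show "f2.span (ext_sq ` ?R) = range ext_sq"
    using f2_pair.linear_span_image[OF ext_sq_linear] ext_sq_span_insert_a[of ?R] B(2) by metis
qed

lemma image_kernel_bases_from_basis:
  assumes B: "f2.independent B" "f2.span B = UNIV" "sqclass a \<in> B"
    and PQ: "P \<union> Q = B - {sqclass a}" "P \<inter> Q = {}" "ext_sq ` f2.span P = range norm_sq"
    and E: "E \<subseteq> {e}" "E \<inter> range ext_sq = {}" "f2.span (E \<union> range ext_sq) = {q. norm_sq q = 0}"
  shows "image_kernel_bases norm_sq (ext_sq ` P) (E \<union> ext_sq ` Q)" "ext_sq ` P \<approx> P" "ext_sq ` Q \<approx> Q"
    "E \<inter> ext_sq ` Q = {}"
proof -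
  note J = ext_sq_basis_minus_a[OF B, folded PQ(1)]
  have inj: "inj_on ext_sq (P \<union> Q)" using J(1) f2.span_superset inj_on_subset by blast
  show "ext_sq ` P \<approx> P" "ext_sq ` Q \<approx> Q"
    using inj inj_on_image_eqpoll_self inj_on_subset by blast+
  show EQ: "E \<inter> ext_sq ` Q = {}" using E(2) by blast
  have "f2.span (range ext_sq) = range ext_sq"
    using f2_pair.linear_subspace_image[OF ext_sq_linear f2.subspace_UNIV] f2.span_eq_iff by simp
  then have span_Un: "f2.span (E \<union> ext_sq ` (P \<union> Q)) = f2.span (E \<union> range ext_sq)"
    using J(3) by (simp only: f2.span_Un)
  have "f2.independent (E \<union> ext_sq ` (P \<union> Q))"
  proof (cases "E = {}")
    case False
    then have "E = {e}" "e \<notin> f2.span (ext_sq ` (P \<union> Q))" using E(1,2) J(3) by auto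
    then show ?thesis using f2.independent_insertI[OF _ J(2)] by simp
  qed (simp add: J(2))
  moreover have "ext_sq ` P \<inter> (E \<union> ext_sq ` Q) = {}"
    using E(2) PQ(2) inj inj_on_image_Int[OF inj, of P Q] by auto
  moreover have "f2.span (ext_sq ` P) = range norm_sq"
    using f2_pair.linear_span_image[OF ext_sq_linear] PQ(3) by simp
  ultimately show "image_kernel_bases norm_sq (ext_sq ` P) (E \<union> ext_sq ` Q)"
    unfolding image_kernel_bases_def using span_Un E(3) by (simp add: image_Un Un_ac)
qed

lemma invariants_with_minus_1:
  assumes "- 1 \<in> norm_group \<iota> \<sigma>"
  obtains Bn Dq R C where "f2.independent (Bn \<union> Dq)" "Bn \<inter> Dq = {}" "f2.span Bn = norm_classes"
    "f2.span (Bn \<union> Dq) = UNIV" "image_kernel_bases norm_sq R C"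
    "Bn \<approx> {..<1::nat} <+> R" "{..<1::nat} <+> C \<approx> {..<2::nat} <+> Dq"
proof -
  have "{sqclass a} \<subseteq> norm_classes" using sqclass_a_in_norm_classes_iff assms by blast
  moreover have "f2.independent {sqclass a}" using sqclass_a_nonzero by simp
  ultimately obtain Bn where Bn: "{sqclass a} \<subseteq> Bn" "Bn \<subseteq> norm_classes" "f2.independent Bn"
    "norm_classes \<subseteq> f2.span Bn"
    by (rule f2.maximal_independent_subset_extend)
  have span_Bn: "f2.span Bn = norm_classes" using f2.span_subspace Bn(2,4) norm_classes_subspace by blast
  obtain B where B: "Bn \<subseteq> B" "B \<subseteq> UNIV" "f2.independent B" "UNIV \<subseteq> f2.span B"
    by (rule f2.maximal_independent_subset_extend[OF subset_UNIV Bn(3)])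
  obtain e where e: "e \<notin> range ext_sq" "f2.span (insert e (range ext_sq)) = {q. norm_sq q = 0}"
    using kernel_norm_sq_with_minus_1[OF assms] by blast
  let ?P = "Bn - {sqclass a}" and ?Q = "B - Bn"
  have aB: "sqclass a \<in> B" and PQ: "?P \<union> ?Q = B - {sqclass a}" "?P \<inter> ?Q = {}"
    using Bn(1) B(1) by blast+
  have "ext_sq ` f2.span ?P = range norm_sq"
    using ext_sq_span_insert_a[of ?P] Bn(1) span_Bn range_norm_sq by (simp add: insert_absorb)
  then have I: "image_kernel_bases norm_sq (ext_sq ` ?P) ({e} \<union> ext_sq ` ?Q)"
    "ext_sq ` ?P \<approx> ?P" "ext_sq ` ?Q \<approx> ?Q" "{e} \<inter> ext_sq ` ?Q = {}"
    using image_kernel_bases_from_basis[OF B(3) top.extremum_uniqueI[OF B(4)] aB PQ, of "{e}" e] e by auto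
  have "Bn \<approx> {..<1::nat} <+> ?P"
    using insert_eqpoll_lessThan_1_Plus[of "sqclass a" ?P] Bn(1) by (simp add: insert_absorb)
  also have "\<dots> \<approx> {..<1::nat} <+> ext_sq ` ?P" using sum_eqpoll_cong[OF eqpoll_refl eqpoll_sym[OF I(2)]] .
  finally have R: "Bn \<approx> {..<1::nat} <+> ext_sq ` ?P" .
  have "e \<notin> ext_sq ` ?Q" using I(4) by blast
  then have "{e} \<union> ext_sq ` ?Q \<approx> {..<1::nat} <+> ext_sq ` ?Q"
    using insert_eqpoll_lessThan_1_Plus by simp
  also have "\<dots> \<approx> {..<1::nat} <+> ?Q" using sum_eqpoll_cong[OF eqpoll_refl I(3)] .
  finally have "{..<1::nat} <+> ({e} \<union> ext_sq ` ?Q) \<approx> {..<1::nat} <+> ({..<1::nat} <+> ?Q)"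
    using sum_eqpoll_cong[OF eqpoll_refl] by blast
  also have "\<dots> \<approx> {..<1 + 1::nat} <+> ?Q" by (rule lessThan_Plus_lessThan_Plus_eqpoll)
  finally have C: "{..<1::nat} <+> ({e} \<union> ext_sq ` ?Q) \<approx> {..<2::nat} <+> ?Q" by (simp add: numeral_2_eq_2)
  have "f2.independent (Bn \<union> ?Q)" "Bn \<inter> ?Q = {}" "f2.span (Bn \<union> ?Q) = UNIV"
    using B by (simp_all add: Un_absorb1 top.extremum_uniqueI)
  from that[OF this(1,2) span_Bn this(3) I(1) R C] show ?thesis .
qed

lemma invariants_without_minus_1:
  assumes "- 1 \<notin> norm_group \<iota> \<sigma>"
  obtains Bn Dq R C where "f2.independent (Bn \<union> Dq)" "Bn \<inter> Dq = {}" "f2.span Bn = norm_classes"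
    "f2.span (Bn \<union> Dq) = UNIV" "image_kernel_bases norm_sq R C"
    "Bn \<approx> {..<0::nat} <+> R" "{..<1::nat} <+> C \<approx> {..<0::nat} <+> Dq"
proof -
  obtain Bn where Bn: "Bn \<subseteq> norm_classes" "f2.independent Bn" "norm_classes \<subseteq> f2.span Bn"
    by (rule f2.maximal_independent_subset)
  have span_Bn: "f2.span Bn = norm_classes" using f2.span_subspace Bn(1,3) norm_classes_subspace by blast
  have "sqclass a \<notin> f2.span Bn" using sqclass_a_in_norm_classes_iff assms span_Bn by blast
  then have "f2.independent (insert (sqclass a) Bn)" using f2.independent_insertI Bn(2) by blast
  then obtain B where B: "insert (sqclass a) Bn \<subseteq> B" "B \<subseteq> UNIV" "f2.independent B" "UNIV \<subseteq> f2.span B"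
    by (rule f2.maximal_independent_subset_extend[OF subset_UNIV])
  let ?Q = "B - Bn - {sqclass a}"
  have a: "sqclass a \<notin> Bn" using \<open>sqclass a \<notin> f2.span Bn\<close> f2.span_superset by blast
  then have PQ: "Bn \<union> ?Q = B - {sqclass a}" "Bn \<inter> ?Q = {}" using B(1) by blast+
  have "ext_sq ` f2.span Bn = range norm_sq" using span_Bn range_norm_sq by simp
  moreover have "f2.span ({} \<union> range ext_sq) = {q. norm_sq q = 0}"
    using kernel_norm_sq_without_minus_1[OF assms] f2.span_eq_iff
      f2_pair.linear_subspace_image[OF ext_sq_linear f2.subspace_UNIV] by simp
  ultimately have I: "image_kernel_bases norm_sq (ext_sq ` Bn) ({} \<union> ext_sq ` ?Q)"
    "ext_sq ` Bn \<approx> Bn" "ext_sq ` ?Q \<approx> ?Q"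
    using image_kernel_bases_from_basis[OF B(3) top.extremum_uniqueI[OF B(4)] _ PQ, of "{}"] B(1) by auto
  have R: "Bn \<approx> {..<0::nat} <+> ext_sq ` Bn"
    using eqpoll_trans[OF eqpoll_sym[OF I(2)] eqpoll_sym[OF lessThan_0_Plus_eqpoll]] .
  have "{..<1::nat} <+> ext_sq ` ?Q \<approx> {..<1::nat} <+> ?Q" using sum_eqpoll_cong[OF eqpoll_refl I(3)] .
  also have "\<dots> \<approx> insert (sqclass a) ?Q"
    using insert_eqpoll_lessThan_1_Plus[of "sqclass a" ?Q] by (simp add: eqpoll_sym)
  also have "insert (sqclass a) ?Q = B - Bn" using B(1) a by blast
  also have "\<dots> \<approx> {..<0::nat} <+> (B - Bn)" using eqpoll_sym[OF lessThan_0_Plus_eqpoll] .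
  finally have C: "{..<1::nat} <+> ({} \<union> ext_sq ` ?Q) \<approx> {..<0::nat} <+> (B - Bn)" by simp
  have "f2.independent (Bn \<union> (B - Bn))" "Bn \<inter> (B - Bn) = {}" "f2.span (Bn \<union> (B - Bn)) = UNIV"
    using B by (simp_all add: Un_absorb1 top.extremum_uniqueI)
  from that[OF this(1,2) span_Bn this(3) I(1) R C] show ?thesis .
qed

lemma square_class_invariants:
  obtains Bn Dq R C where "f2.independent (Bn \<union> Dq)" "Bn \<inter> Dq = {}" "f2.span Bn = norm_classes"
    "f2.span (Bn \<union> Dq) = UNIV" "image_kernel_bases norm_sq R C"
    "Bn \<approx> {..<Upsilon \<iota> \<sigma>} <+> R" "{..<1::nat} <+> C \<approx> {..<2 * Upsilon \<iota> \<sigma>} <+> Dq"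
proof (cases "- 1 \<in> norm_group \<iota> \<sigma>")
  case True
  then obtain Bn Dq R C where "f2.independent (Bn \<union> Dq)" "Bn \<inter> Dq = {}" "f2.span Bn = norm_classes"
    "f2.span (Bn \<union> Dq) = UNIV" "image_kernel_bases norm_sq R C"
    "Bn \<approx> {..<1::nat} <+> R" "{..<1::nat} <+> C \<approx> {..<2::nat} <+> Dq"
    by (rule invariants_with_minus_1)
  moreover have "Upsilon \<iota> \<sigma> = 1" using True by (simp add: Upsilon_def)
  ultimately show ?thesis by (intro that[of Bn Dq R C]) simp_all
next
  case False
  then obtain Bn Dq R C where "f2.independent (Bn \<union> Dq)" "Bn \<inter> Dq = {}" "f2.span Bn = norm_classes"
    "f2.span (Bn \<union> Dq) = UNIV" "image_kernel_bases norm_sq R C"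
    "Bn \<approx> {..<0::nat} <+> R" "{..<1::nat} <+> C \<approx> {..<0::nat} <+> Dq"
    by (rule invariants_without_minus_1)
  moreover have "Upsilon \<iota> \<sigma> = 0" using False by (simp add: Upsilon_def)
  ultimately show ?thesis by (intro that[of Bn Dq R C]) simp_all
qed

end

section \<open>Cosets of subgroups of \<open>F\<^sup>\<times>\<close>\<close>

definition mult_subgroup :: "'a::field set \<Rightarrow> bool" where
  "mult_subgroup H \<longleftrightarrow> (\<forall>x\<in>H. x \<noteq> 0) \<and> 1 \<in> H \<and> (\<forall>x\<in>H. \<forall>y\<in>H. x * y \<in> H) \<and> (\<forall>x\<in>H. 1 / x \<in> H)"

lemma mult_subgroup_squares: "mult_subgroup (squares_of_field :: 'a::field set)"
  unfolding mult_subgroup_def squares_of_field_def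
  by (auto intro: exI[of _ 1] exI[of _ "_ * _"] exI[of _ "1 / _"] simp: ac_simps)

lemma coset_mult_absorb:
  assumes "mult_subgroup H" "h \<in> H" shows "(x * h) *o H = x *o H"
proof (intro Set.set_eqI iffI)
  fix y assume "y \<in> (x * h) *o H"
  then obtain k where "k \<in> H" "y = x * (h * k)" unfolding elt_set_times_def by (auto simp: mult.assoc)
  then show "y \<in> x *o H" using assms unfolding mult_subgroup_def elt_set_times_def by blast
next
  fix y assume "y \<in> x *o H"
  then obtain k where k: "k \<in> H" "y = x * k" unfolding elt_set_times_def by auto
  have "h \<noteq> 0" "1 / h \<in> H" using assms unfolding mult_subgroup_def by auto
  then have "(1 / h) * k \<in> H" using assms(1) k(1) unfolding mult_subgroup_def by blast
  moreover have "y = (x * h) * ((1 / h) * k)" using k \<open>h \<noteq> 0\<close> by simp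
  ultimately show "y \<in> (x * h) *o H" unfolding elt_set_times_def by blast
qed

lemma coset_eq_iff:
  assumes "mult_subgroup H" "y \<noteq> 0" shows "x *o H = y *o H \<longleftrightarrow> x / y \<in> H"
proof
  assume "x *o H = y *o H"
  moreover have "x \<in> x *o H" using assms(1) unfolding mult_subgroup_def elt_set_times_def by force
  ultimately obtain k where "k \<in> H" "x = y * k" unfolding elt_set_times_def by auto
  then show "x / y \<in> H" using assms(2) by simp
next
  assume "x / y \<in> H"
  then show "x *o H = y *o H" using coset_mult_absorb[OF assms(1), of "x / y" y] assms(2) by simp
qed

lemma coset_times_coset:
  assumes "mult_subgroup H" shows "(x *o H) * (y *o H) = (x * y) *o H"
proof -
  have "H * H \<subseteq> H" using assms unfolding mult_subgroup_def set_times_def by blast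
  moreover have "H \<subseteq> H * H" using assms unfolding mult_subgroup_def set_times_def by force
  ultimately have "H * H = H" by blast
  then show ?thesis by (simp add: set_times_rearrange)
qed

text \<open>The coset \<open>x H\<close> of a group \<open>H \<supseteq> F\<^sup>\<times>\<^sup>2\<close> depends only on the square class of \<open>x\<close>.\<close>

definition sqclass_coset :: "'a::field set \<Rightarrow> 'a sqclass \<Rightarrow> 'a set" where
  "sqclass_coset H q = (SOME x. x \<noteq> 0 \<and> q = sqclass x) *o H"

context
  fixes H :: "'a::field set"
  assumes H: "mult_subgroup H" "squares_of_field \<subseteq> H"
begin

lemma sqclass_coset_sqclass: "x \<noteq> 0 \<Longrightarrow> sqclass_coset H (sqclass x) = x *o H"
proof -
  assume x: "x \<noteq> 0"
  define x' where "x' = (SOME x'. x' \<noteq> 0 \<and> sqclass x = sqclass x')"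
  have "x' \<noteq> 0" "sqclass x = sqclass x'"
    unfolding x'_def using someI_ex[OF sqclass_surj[of "sqclass x"]] by auto
  then obtain w where w: "x' = x * (w * w)" "w \<noteq> 0" using sqclass_eq_iff x by (metis mult.assoc mult_zero_right)
  then have "w * w \<in> H" using H(2) unfolding squares_of_field_def by blast
  then show ?thesis unfolding sqclass_coset_def x'_def[symmetric] w(1) by (rule coset_mult_absorb[OF H(1)])
qed

lemma sqclass_coset_add: "sqclass_coset H (p + q) = sqclass_coset H p * sqclass_coset H q"
proof -
  obtain x y where "x \<noteq> 0" "y \<noteq> 0" "p = sqclass x" "q = sqclass y" by (metis sqclass_cases)
  then show ?thesis by (simp add: sqclass_mult sqclass_coset_sqclass coset_times_coset[OF H(1)])
qed

lemma sqclass_coset_0: "sqclass_coset H 0 = H"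
  using sqclass_coset_sqclass[of 1] by (simp add: elt_set_times_def)

lemma sqclass_coset_inj_on:
  assumes "f2.independent (Bh \<union> D)" "Bh \<inter> D = {}" "f2.span Bh = sqclass ` H"
  shows "inj_on (sqclass_coset H) (f2.span D)"
proof (rule inj_onI)
  fix p q assume pq: "p \<in> f2.span D" "q \<in> f2.span D" "sqclass_coset H p = sqclass_coset H q"
  obtain x y where xy: "x \<noteq> 0" "y \<noteq> 0" "p = sqclass x" "q = sqclass y" by (metis sqclass_cases)
  then have "x / y \<in> H" using pq(3) coset_eq_iff[OF H(1)] by (simp add: sqclass_coset_sqclass)
  moreover have "p + q = sqclass (x / y)"
    using xy sqclass_mult sqclass_eq_iff by (metis divide_eq_0_iff nonzero_eq_divide_eq)
  moreover have "p + q \<in> f2.span D" using pq f2.span_add by blast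
  ultimately have "p + q \<in> f2.span Bh \<inter> f2.span D" using assms(3) by auto
  then show "p = q" using f2_span_Int_span_disjoint[OF assms(1,2)] f2_add_eq_0_iff by blast
qed

lemma sqclass_coset_image:
  assumes "U \<subseteq> units_of_field" "f2.span Bh = sqclass ` H" "f2.span (Bh \<union> D) = sqclass ` U"
  shows "sqclass_coset H ` f2.span D = quot U H"
proof (intro Set.set_eqI iffI)
  fix A assume "A \<in> sqclass_coset H ` f2.span D"
  then obtain u where "u \<in> U" "A = sqclass_coset H (sqclass u)"
    using assms(3) f2.span_mono[of D "Bh \<union> D"] by auto
  then show "A \<in> quot U H"
    using assms(1) by (auto simp: sqclass_coset_sqclass quot_def units_of_field_def)
next
  fix A assume "A \<in> quot U H"
  then obtain u where u: "u \<in> U" "u \<noteq> 0" "A = u *o H"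
    using assms(1) unfolding quot_def units_of_field_def by auto
  then have "sqclass u \<in> f2.span (Bh \<union> D)" using assms(3) by simp
  then obtain p d where pd: "p \<in> f2.span Bh" "d \<in> f2.span D" "sqclass u = p + d"
    unfolding f2.span_Un by blast
  obtain h where h: "h \<in> H" "p = sqclass h" using pd(1) assms(2) by auto
  have "h \<noteq> 0" using h H(1) unfolding mult_subgroup_def by blast
  have "d = sqclass u + p" using pd(3) by (simp add: add.left_commute)
  also have "\<dots> = sqclass (u * h)" using h \<open>h \<noteq> 0\<close> u(2) by (simp add: sqclass_mult)
  finally have "sqclass_coset H d = A"
    using u \<open>h \<noteq> 0\<close> coset_mult_absorb[OF H(1) h(1)] by (simp add: sqclass_coset_sqclass)
  then show "A \<in> sqclass_coset H ` f2.span D" using pd(2) by blast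
qed

end

lemma F2_basis_image:
  fixes g :: "'v::f2_space \<Rightarrow> 'c::comm_monoid_mult set"
  assumes D: "f2.independent D" and g: "bij_betw g (f2.span D) Q"
    and hom: "\<And>x y. x \<in> f2.span D \<Longrightarrow> y \<in> f2.span D \<Longrightarrow> g (x + y) = g x * g y" and "g 0 = H"
  shows "F2_basis H Q (g ` D)"
proof -
  have inj: "inj_on g D" using inj_on_subset[OF bij_betw_imp_inj_on[OF g] f2.span_superset] .
  have prod_image: "H * \<Prod>(g ` Y) = g (\<Sum>Y)" if Y: "Y \<in> Fpow D" for Y
  proof -
    have "finite Y" "Y \<subseteq> D" using Y by (auto simp: Fpow_def)
    then have "H * (\<Prod>y\<in>Y. g y) = g (\<Sum>Y)"
    proof (induction Y rule: finite_induct)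
      case (insert y Y)
      have "H * (\<Prod>y\<in>insert y Y. g y) = g y * (H * (\<Prod>y\<in>Y. g y))"
        by (simp only: prod.insert[OF insert(1,2)] mult.left_commute)
      also have "\<dots> = g y * g (\<Sum>Y)" using insert by simp
      also have "\<dots> = g (y + \<Sum>Y)"
      proof -
        have "y \<in> f2.span D" "\<Sum>Y \<in> f2.span D"
          using insert(4) f2.span_base f2.span_sum[of Y "\<lambda>x. x" D] by auto
        then show ?thesis using hom by simp
      qed
      finally show ?case using insert by simp
    qed (use \<open>g 0 = H\<close> in \<open>simp del: set_one\<close>)
    then show ?thesis using inj_on_subset[OF inj \<open>Y \<subseteq> D\<close>] by (simp add: prod.reindex)
  qed
  have "bij_betw (g \<circ> Sum) (Fpow D) Q"
    using bij_betw_trans[OF f2_independent_bij_betw_Sum[OF D] g] .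
  then have "bij_betw ((\<lambda>X. H * \<Prod>X) \<circ> image g) (Fpow D) Q"
    using bij_betw_cong[of "Fpow D" "(\<lambda>X. H * \<Prod>X) \<circ> image g" "g \<circ> Sum" Q] prod_image by simp
  then have "bij_betw (\<lambda>X. H * \<Prod>X) (Fpow (g ` D)) Q"
    using bij_betw_comp_iff[OF bij_betw_image_Fpow[OF inj_on_imp_bij_betw[OF inj]]] by blast
  moreover have "g ` D \<subseteq> Q" using g f2.span_superset by (auto simp: bij_betw_def)
  ultimately show ?thesis unfolding F2_basis_def Fpow_def by (simp add: conj_commute)
qed

lemma F2_basis_unique: "F2_basis H Q B \<Longrightarrow> F2_basis H Q B' \<Longrightarrow> B \<approx> B'"
proof -
  assume "F2_basis H Q B" "F2_basis H Q B'"
  moreover have "Fpow X = {Y. finite Y \<and> Y \<subseteq> X}" for X :: "'a set set" by (auto simp: Fpow_def)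
  ultimately have "Fpow B \<approx> Q" "Fpow B' \<approx> Q"
    unfolding F2_basis_def eqpoll_def by metis+
  then show "B \<approx> B'" using Fpow_eqpoll_imp_eqpoll eqpoll_trans[OF _ eqpoll_sym] by blast
qed

lemma quot_F2_basis:
  assumes U: "U \<subseteq> units_of_field" and H: "mult_subgroup H" "squares_of_field \<subseteq> H"
    and D: "f2.independent (Bh \<union> D)" "Bh \<inter> D = {}"
    and span: "f2.span Bh = sqclass ` H" "f2.span (Bh \<union> D) = sqclass ` U"
  obtains B where "F2_basis H (quot U H) B" "B \<approx> D"
proof
  note inj = sqclass_coset_inj_on[OF H D span(1)]
  have "bij_betw (sqclass_coset H) (f2.span D) (quot U H)"
    unfolding bij_betw_def using inj sqclass_coset_image[OF H U span] by blast
  then show "F2_basis H (quot U H) (sqclass_coset H ` D)"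
    using F2_basis_image D(1) f2.independent_mono sqclass_coset_add[OF H] sqclass_coset_0[OF H]
    by (metis sup.cobounded2)
  show "sqclass_coset H ` D \<approx> D"
    using inj_on_image_eqpoll_self[OF inj_on_subset[OF inj f2.span_superset]] .
qed

section \<open>Isomorphisms of the modules of square classes\<close>

lemma sqclass_image_units: "sqclass ` units_of_field = UNIV"
  unfolding units_of_field_def by (auto intro: sqclass_cases)

lemma sqclass_image_squares: "sqclass ` squares_of_field = {0}"
proof -
  have "sqclass (x * x) = 0" if "x \<noteq> 0" for x :: 'a
    using sqclass_eq_0_iff[of "x * x"] that by auto
  moreover have "(1::'a) \<in> squares_of_field" unfolding squares_of_field_def by (auto intro!: exI[of _ 1])
  ultimately show ?thesis unfolding squares_of_field_def by (auto simp: image_iff) (metis sqclass_1)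
qed

lemma square_coset_bij:
  "bij_betw (sqclass_coset squares_of_field) UNIV (quot units_of_field (squares_of_field :: 'a::field set))"
proof -
  obtain B :: "'a sqclass set" where B: "f2.independent B" "UNIV \<subseteq> f2.span B"
    by (rule f2.maximal_independent_subset[of UNIV]) blast
  have span_B: "f2.span B = UNIV" using B(2) by (simp add: top.extremum_uniqueI)
  have span: "f2.span {} = sqclass ` squares_of_field" "f2.span ({} \<union> B) = sqclass ` units_of_field"
    using span_B by (simp_all add: sqclass_image_squares sqclass_image_units)
  have "inj_on (sqclass_coset squares_of_field) (f2.span B)"
    using sqclass_coset_inj_on[OF mult_subgroup_squares subset_refl _ _ span(1)] B(1) by simp
  moreover have "sqclass_coset squares_of_field ` f2.span B = quot units_of_field squares_of_field"
    using sqclass_coset_image[OF mult_subgroup_squares subset_refl subset_refl span] .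
  ultimately show ?thesis using span_B by (simp add: bij_betw_def)
qed

lemma square_coset_gal:
  assumes "nonzero_mult_hom \<sigma>" "bij \<sigma>" "\<sigma> 0 = 0"
  shows "sqclass_coset squares_of_field (sqclass_map \<sigma> q) = \<sigma> ` sqclass_coset squares_of_field q"
proof -
  obtain x where x: "x \<noteq> 0" "q = sqclass x" using sqclass_cases by blast
  have "\<sigma> ` (x *o squares_of_field) = \<sigma> x *o squares_of_field"
  proof (intro Set.set_eqI iffI)
    fix y assume "y \<in> \<sigma> ` (x *o squares_of_field)"
    then obtain w where "w \<noteq> 0" "y = \<sigma> (x * (w * w))"
      unfolding elt_set_times_def squares_of_field_def by auto
    then have "\<sigma> w \<noteq> 0" "y = \<sigma> x * (\<sigma> w * \<sigma> w)" using assms(1) unfolding nonzero_mult_hom_def by auto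
    then show "y \<in> \<sigma> x *o squares_of_field"
      unfolding elt_set_times_def squares_of_field_def by blast
  next
    fix y assume "y \<in> \<sigma> x *o squares_of_field"
    then obtain v where v: "v \<noteq> 0" "y = \<sigma> x * (v * v)"
      unfolding elt_set_times_def squares_of_field_def by auto
    obtain w where "v = \<sigma> w" using assms(2) by (metis bij_pointE)
    then have "w \<noteq> 0" "y = \<sigma> (x * (w * w))" using v assms(1,3) by (auto simp: nonzero_mult_hom_def)
    then show "y \<in> \<sigma> ` (x *o squares_of_field)"
      unfolding elt_set_times_def squares_of_field_def by blast
  qed
  then show ?thesis
    using x assms(1) by (simp add: sqclass_map_sqclass sqclass_coset_sqclass[OF mult_subgroup_squares]
        nonzero_mult_hom_def)
qed

definition equivariant_iso ::
  "'a::times set set \<Rightarrow> 'b::times set set \<Rightarrow> ('a \<Rightarrow> 'a) \<Rightarrow> ('b \<Rightarrow> 'b) \<Rightarrow> ('a set \<Rightarrow> 'b set) \<Rightarrow> bool" where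
  "equivariant_iso Q1 Q2 \<tau>1 \<tau>2 f \<longleftrightarrow> bij_betw f Q1 Q2 \<and> (\<forall>A\<in>Q1. \<forall>B\<in>Q1. f (A * B) = f A * f B) \<and>
     (\<forall>A\<in>Q1. f (\<tau>1 ` A) = \<tau>2 ` f A)"

context
  fixes \<rho>1 :: "'v::f2_space \<Rightarrow> 'a::times set" and \<rho>2 :: "'w::f2_space \<Rightarrow> 'b::times set"
    and Q1 :: "'a set set" and Q2 :: "'b set set" and t1 :: "'v \<Rightarrow> 'v" and t2 :: "'w \<Rightarrow> 'w"
    and \<tau>1 :: "'a \<Rightarrow> 'a" and \<tau>2 :: "'b \<Rightarrow> 'b"
  assumes \<rho>1: "bij_betw \<rho>1 UNIV Q1" "\<And>p q. \<rho>1 (p + q) = \<rho>1 p * \<rho>1 q" "\<And>q. \<rho>1 (t1 q) = \<tau>1 ` \<rho>1 q"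
    and \<rho>2: "bij_betw \<rho>2 UNIV Q2" "\<And>p q. \<rho>2 (p + q) = \<rho>2 p * \<rho>2 q" "\<And>q. \<rho>2 (t2 q) = \<tau>2 ` \<rho>2 q"
begin

lemma equivariant_iso_imp_commuting_iso:
  assumes "equivariant_iso Q1 Q2 \<tau>1 \<tau>2 f"
  shows "commuting_iso t1 t2 (inv_into UNIV \<rho>2 \<circ> f \<circ> \<rho>1)"
proof -
  let ?\<phi> = "inv_into UNIV \<rho>2 \<circ> f \<circ> \<rho>1"
  have f: "bij_betw f Q1 Q2" "\<And>A B. A \<in> Q1 \<Longrightarrow> B \<in> Q1 \<Longrightarrow> f (A * B) = f A * f B"
    "\<And>A. A \<in> Q1 \<Longrightarrow> f (\<tau>1 ` A) = \<tau>2 ` f A"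
    using assms unfolding equivariant_iso_def by auto
  have in_Q1: "\<rho>1 q \<in> Q1" for q using \<rho>1(1) bij_betwE by blast
  have \<rho>\<phi>: "\<rho>2 (?\<phi> q) = f (\<rho>1 q)" for q
    using f(1) in_Q1 \<rho>2(1) by (simp add: bij_betw_def f_inv_into_f bij_betwE)
  have inj2: "inj \<rho>2" using \<rho>2(1) bij_betw_imp_inj_on by blast
  have "bij ?\<phi>"
    using bij_betw_trans[OF bij_betw_trans[OF \<rho>1(1) f(1)] bij_betw_inv_into[OF \<rho>2(1)]]
    by (simp add: comp_assoc)
  moreover have "?\<phi> (p + q) = ?\<phi> p + ?\<phi> q" for p q
  proof (rule injD[OF inj2])
    have "\<rho>2 (?\<phi> (p + q)) = f (\<rho>1 p * \<rho>1 q)" by (simp only: \<rho>\<phi> \<rho>1(2))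
    also have "\<dots> = \<rho>2 (?\<phi> p + ?\<phi> q)" by (simp only: f(2)[OF in_Q1 in_Q1] \<rho>\<phi> \<rho>2(2))
    finally show "\<rho>2 (?\<phi> (p + q)) = \<rho>2 (?\<phi> p + ?\<phi> q)" .
  qed
  moreover have "?\<phi> (t1 q) = t2 (?\<phi> q)" for q
  proof (rule injD[OF inj2])
    have "\<rho>2 (?\<phi> (t1 q)) = f (\<tau>1 ` \<rho>1 q)" by (simp only: \<rho>\<phi> \<rho>1(3))
    also have "\<dots> = \<rho>2 (t2 (?\<phi> q))" by (simp only: f(3)[OF in_Q1] \<rho>\<phi> \<rho>2(3))
    finally show "\<rho>2 (?\<phi> (t1 q)) = \<rho>2 (t2 (?\<phi> q))" .
  qed
  ultimately show ?thesis unfolding commuting_iso_def f2_linear_iff_additive by blast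
qed

lemma commuting_iso_imp_equivariant_iso:
  assumes "commuting_iso t1 t2 \<phi>"
  shows "equivariant_iso Q1 Q2 \<tau>1 \<tau>2 (\<rho>2 \<circ> \<phi> \<circ> inv_into UNIV \<rho>1)"
proof -
  have \<phi>: "f2_linear \<phi>" "bij \<phi>" "\<And>x. \<phi> (t1 x) = t2 (\<phi> x)"
    using assms unfolding commuting_iso_def by auto
  let ?f = "\<rho>2 \<circ> \<phi> \<circ> inv_into UNIV \<rho>1"
  have f\<rho>: "?f (\<rho>1 q) = \<rho>2 (\<phi> q)" for q using \<rho>1(1) by (simp add: bij_betw_def)
  have Q1: "A \<in> Q1 \<Longrightarrow> \<exists>q. A = \<rho>1 q" for A using \<rho>1(1) by (metis bij_betw_def imageE)
  have "bij_betw ?f Q1 Q2"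
    using bij_betw_trans[OF bij_betw_inv_into[OF \<rho>1(1)] bij_betw_trans[OF \<phi>(2) \<rho>2(1)]]
    by (simp add: comp_assoc)
  moreover have "?f (A * B) = ?f A * ?f B" if AB: "A \<in> Q1" "B \<in> Q1" for A B
  proof -
    obtain p q where "A = \<rho>1 p" "B = \<rho>1 q" using Q1 AB by blast
    then show ?thesis by (simp only: f\<rho> \<rho>1(2)[symmetric] \<rho>2(2)[symmetric] f2_pair.linear_add[OF \<phi>(1)])
  qed
  moreover have "?f (\<tau>1 ` A) = \<tau>2 ` ?f A" if A: "A \<in> Q1" for A
  proof -
    obtain q where "A = \<rho>1 q" using Q1 A by blast
    then show ?thesis by (simp only: f\<rho> \<rho>1(3)[symmetric] \<rho>2(3)[symmetric] \<phi>(3))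
  qed
  ultimately show ?thesis unfolding equivariant_iso_def by blast
qed

end

lemma T_mod_iso_iff_commuting_iso:
  fixes \<sigma>1 :: "'k::field \<Rightarrow> 'k" and \<sigma>2 :: "'l::field \<Rightarrow> 'l"
  assumes "nonzero_mult_hom \<sigma>1" "bij \<sigma>1" "\<sigma>1 0 = 0" "nonzero_mult_hom \<sigma>2" "bij \<sigma>2" "\<sigma>2 0 = 0"
  shows "T_mod_iso \<sigma>1 \<sigma>2 \<longleftrightarrow> (\<exists>\<phi>. commuting_iso (sqclass_map \<sigma>1) (sqclass_map \<sigma>2) \<phi>)"
proof -
  note hyps = square_coset_bij sqclass_coset_add[OF mult_subgroup_squares subset_refl]
    square_coset_gal[OF assms(1-3)] square_coset_bij sqclass_coset_add[OF mult_subgroup_squares subset_refl]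
    square_coset_gal[OF assms(4-6)]
  have "T_mod_iso \<sigma>1 \<sigma>2 \<longleftrightarrow>
    (\<exists>f. equivariant_iso (quot units_of_field squares_of_field) (quot units_of_field squares_of_field) \<sigma>1 \<sigma>2 f)"
    unfolding T_mod_iso_def equivariant_iso_def ..
  also have "\<dots> \<longleftrightarrow> (\<exists>\<phi>. commuting_iso (sqclass_map \<sigma>1) (sqclass_map \<sigma>2) \<phi>)"
    using equivariant_iso_imp_commuting_iso[OF hyps] commuting_iso_imp_equivariant_iso[OF hyps]
    by (meson exE exI)
  finally show ?thesis .
qed

context quadratic_ext
begin

lemma mult_subgroup_norm_group: "mult_subgroup (norm_group \<iota> \<sigma>)"
  unfolding mult_subgroup_def
  using norm_group_nonzero norm_group_mult norm_group_inverse norm_group_square[of 1] by auto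

lemma squares_subset_norm_group: "squares_of_field \<subseteq> norm_group \<iota> \<sigma>"
  unfolding squares_of_field_def using norm_group_square by blast

lemma norm_group_subset_units: "norm_group \<iota> \<sigma> \<subseteq> units_of_field"
  unfolding units_of_field_def using norm_group_nonzero by blast

lemma norm_quotient_invariants:
  obtains R C Bn Dq where "image_kernel_bases norm_sq R C"
    "F2_basis squares_of_field (quot (norm_group \<iota> \<sigma>) squares_of_field) Bn"
    "F2_basis (norm_group \<iota> \<sigma>) (quot units_of_field (norm_group \<iota> \<sigma>)) Dq"
    "Bn \<approx> {..<Upsilon \<iota> \<sigma>} <+> R" "{..<1::nat} <+> C \<approx> {..<2 * Upsilon \<iota> \<sigma>} <+> Dq"
proof -
  obtain Bn Dq R C where I: "f2.independent (Bn \<union> Dq)" "Bn \<inter> Dq = {}" "f2.span Bn = norm_classes"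
    "f2.span (Bn \<union> Dq) = UNIV" "image_kernel_bases norm_sq R C"
    "Bn \<approx> {..<Upsilon \<iota> \<sigma>} <+> R" "{..<1::nat} <+> C \<approx> {..<2 * Upsilon \<iota> \<sigma>} <+> Dq"
    by (rule square_class_invariants)
  have span: "f2.span Bn = sqclass ` norm_group \<iota> \<sigma>" "f2.span (Bn \<union> Dq) = sqclass ` units_of_field"
    "f2.span {} = sqclass ` squares_of_field" "f2.span ({} \<union> Bn) = sqclass ` norm_group \<iota> \<sigma>"
    using I(3,4) by (simp_all add: norm_classes_def sqclass_image_units sqclass_image_squares)
  have "f2.independent ({} \<union> Bn)" using I(1) f2.independent_mono by auto
  obtain Bn' where Bn': "F2_basis squares_of_field (quot (norm_group \<iota> \<sigma>) squares_of_field) Bn'" "Bn' \<approx> Bn"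
    by (rule quot_F2_basis[OF norm_group_subset_units mult_subgroup_squares subset_refl
          \<open>f2.independent ({} \<union> Bn)\<close> _ span(3,4)]) simp
  obtain Dq' where Dq': "F2_basis (norm_group \<iota> \<sigma>) (quot units_of_field (norm_group \<iota> \<sigma>)) Dq'" "Dq' \<approx> Dq"
    by (rule quot_F2_basis[OF subset_refl mult_subgroup_norm_group squares_subset_norm_group I(1,2) span(1,2)])
  have "Bn' \<approx> {..<Upsilon \<iota> \<sigma>} <+> R" using eqpoll_trans[OF Bn'(2) I(6)] .
  moreover have "{..<1::nat} <+> C \<approx> {..<2 * Upsilon \<iota> \<sigma>} <+> Dq'"
    using eqpoll_trans[OF I(7) sum_eqpoll_cong[OF eqpoll_refl eqpoll_sym[OF Dq'(2)]]] .
  ultimately show ?thesis using that I(5) Bn'(1) Dq'(1) by blast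
qed

end

lemma all_F2_bases_eqpoll_iff:
  assumes "F2_basis H1 Q1 D1" "F2_basis H2 Q2 D2" "F2_basis H3 Q3 N1" "F2_basis H4 Q4 N2"
  shows "(\<forall>B1 B2 C1 C2. F2_basis H1 Q1 B1 \<longrightarrow> F2_basis H2 Q2 B2 \<longrightarrow> F2_basis H3 Q3 C1 \<longrightarrow>
            F2_basis H4 Q4 C2 \<longrightarrow> A1 <+> B1 \<approx> A2 <+> B2 \<and> A3 <+> C1 \<approx> A4 <+> C2) \<longleftrightarrow>
         A1 <+> D1 \<approx> A2 <+> D2 \<and> A3 <+> N1 \<approx> A4 <+> N2"
  using assms F2_basis_unique Plus_eqpoll_Plus_cong_iff by meson

theorem corollary3:
  fixes \<iota>1 :: "'a::field \<Rightarrow> 'k::field" and a1 :: 'a and r1 :: 'k and \<sigma>1 :: "'k \<Rightarrow> 'k"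
    and \<iota>2 :: "'b::field \<Rightarrow> 'l::field" and a2 :: 'b and r2 :: 'l and \<sigma>2 :: "'l \<Rightarrow> 'l"
  assumes char1: "(2::'a) \<noteq> 0" and char2: "(2::'b) \<noteq> 0"
    and a1: "a1 \<noteq> 0" "a1 \<notin> squares_of_field"
    and a2: "a2 \<noteq> 0" "a2 \<notin> squares_of_field"
    and K1: "quad_ext \<iota>1 a1 r1" and K2: "quad_ext \<iota>2 a2 r2"
    and G1: "gal_generator \<iota>1 \<sigma>1" and G2: "gal_generator \<iota>2 \<sigma>2"
  shows "T_mod_iso \<sigma>1 \<sigma>2 \<longleftrightarrow>
    (\<forall>B1 B2 C1 C2.
       F2_basis (norm_group \<iota>1 \<sigma>1) (quot units_of_field (norm_group \<iota>1 \<sigma>1)) B1 \<longrightarrow>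
       F2_basis (norm_group \<iota>2 \<sigma>2) (quot units_of_field (norm_group \<iota>2 \<sigma>2)) B2 \<longrightarrow>
       F2_basis squares_of_field (quot (norm_group \<iota>1 \<sigma>1) squares_of_field) C1 \<longrightarrow>
       F2_basis squares_of_field (quot (norm_group \<iota>2 \<sigma>2) squares_of_field) C2 \<longrightarrow>
       ({..<2 * Upsilon \<iota>1 \<sigma>1} <+> B1) \<approx> ({..<2 * Upsilon \<iota>2 \<sigma>2} <+> B2) \<and>
       ({..<Upsilon \<iota>2 \<sigma>2} <+> C1) \<approx> ({..<Upsilon \<iota>1 \<sigma>1} <+> C2))"
proof -
  interpret K1: quadratic_ext \<iota>1 a1 r1 \<sigma>1 using char1 a1 K1 G1 by unfold_locales
  interpret K2: quadratic_ext \<iota>2 a2 r2 \<sigma>2 using char2 a2 K2 G2 by unfold_locales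
  obtain R1 C1 N1 D1 where I1: "image_kernel_bases K1.norm_sq R1 C1"
    "F2_basis squares_of_field (quot (norm_group \<iota>1 \<sigma>1) squares_of_field) N1"
    "F2_basis (norm_group \<iota>1 \<sigma>1) (quot units_of_field (norm_group \<iota>1 \<sigma>1)) D1"
    "N1 \<approx> {..<Upsilon \<iota>1 \<sigma>1} <+> R1" "{..<1::nat} <+> C1 \<approx> {..<2 * Upsilon \<iota>1 \<sigma>1} <+> D1"
    by (rule K1.norm_quotient_invariants)
  obtain R2 C2 N2 D2 where I2: "image_kernel_bases K2.norm_sq R2 C2"
    "F2_basis squares_of_field (quot (norm_group \<iota>2 \<sigma>2) squares_of_field) N2"
    "F2_basis (norm_group \<iota>2 \<sigma>2) (quot units_of_field (norm_group \<iota>2 \<sigma>2)) D2"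
    "N2 \<approx> {..<Upsilon \<iota>2 \<sigma>2} <+> R2" "{..<1::nat} <+> C2 \<approx> {..<2 * Upsilon \<iota>2 \<sigma>2} <+> D2"
    by (rule K2.norm_quotient_invariants)
  have "T_mod_iso \<sigma>1 \<sigma>2 \<longleftrightarrow> (\<exists>\<phi>. commuting_iso K1.norm_sq K2.norm_sq \<phi>)"
    using T_mod_iso_iff_commuting_iso[OF K1.nonzero_mult_hom_gal K1.gal_bij K1.gal_0
        K2.nonzero_mult_hom_gal K2.gal_bij K2.gal_0]
    by (simp add: K1.norm_sq_def[abs_def] K2.norm_sq_def[abs_def] commuting_iso_add_id_iff)
  also have "\<dots> \<longleftrightarrow> R1 \<approx> R2 \<and> C1 \<approx> C2"
    by (rule commuting_iso_iff_eqpoll[OF K1.norm_sq_linear K2.norm_sq_linear I1(1) I2(1)])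
  also have "\<dots> \<longleftrightarrow> {..<2 * Upsilon \<iota>1 \<sigma>1} <+> D1 \<approx> {..<2 * Upsilon \<iota>2 \<sigma>2} <+> D2 \<and>
      {..<Upsilon \<iota>2 \<sigma>2} <+> N1 \<approx> {..<Upsilon \<iota>1 \<sigma>1} <+> N2"
    using lessThan_Plus_eqpoll_swap_iff[OF I1(4) I2(4)] lessThan_Plus_eqpoll_cancel_iff[OF I1(5) I2(5)]
    by blast
  finally show ?thesis by (simp only: all_F2_bases_eqpoll_iff[OF I1(3) I2(3) I1(2) I2(2)])
qed

end
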